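(* Let $P : \mathcal{E}\to\mathcal{B}$ be a lax functor between bicategories which is fibered in pseudogroupoids. Then for each object $b$ of $\mathcal{B}$ the fiber bicategory $P^{-1}(b)$ is a pseudogroupoid.
   Context: For a lax functor $P$ with structure 2-cells $\varphi_{g,f} : Pg\circ Pf\Rightarrow P(g\circ f)$: a 1-morphism $f : x\to y$ of $\mathcal{E}$ is cartesian if (i) for every 1-morphism $g : z\to y$ in $\mathcal{E}$, 1-morphism $h : Pz\to Px$ in $\mathcal{B}$ and invertible 2-morphism $\alpha : Pf\circ h\Rightarrow Pg$, there exist a 1-morphism $\tilde h : z\to x$ and invertible 2-morphisms $\tilde\alpha : f\circ\tilde h\Rightarrow g$, $\tilde\beta : P\tilde h\Rightarrow h$ with $\alpha\cdot(Pf*\tilde\beta) = P\tilde\alpha\cdot\varphi_{f,\tilde h}$ (a "lift" of $(h,\alpha)$); and (ii) for every 2-morphism $\sigma : g\Rightarrow g'$ in $\mathcal{E}$, lifts $(\tilde h,\tilde\alpha,\tilde\beta)$ of $(h,\alpha)$ and $(\tilde h',\tilde\alpha',\tilde\beta')$ of $(h',\alpha')$ (with $\alpha' : Pf\circ h'\Rightarrow Pg'$), and every 2-morphism $\delta : h\Rightarrow h'$ with $\alpha'\cdot(Pf*\delta) = P\sigma\cdot\alpha$, there is a unique 2-morphism $\tilde\delta : \tilde h\Rightarrow\tilde h'$ with $\tilde\alpha'\cdot(f*\tilde\delta) = \sigma\cdot\tilde\alpha$ and $\tilde\beta'\cdot P\tilde\delta = \delta\cdot\tilde\beta$. $P$ is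 fibered in pseudogroupoids if every 1-morphism of $\mathcal{E}$ is cartesian, every 1-morphism $f : b\to P(e)$ in $\mathcal{B}$ has a 1-morphism $\tilde f : e'\to e$ in $\mathcal{E}$ with $P\tilde f = f$, and each functor $P : \mathcal{E}(x,y)\to\mathcal{B}(Px,Py)$ is fibered in groupoids (every morphism cartesian in the usual 1-categorical sense and every morphism of $\mathcal{B}(Px,Py)$ into $P(u)$ lifts to a morphism into $u$). Cartesian lifts are assumed chosen (a cleavage). The fiber bicategory $P^{-1}(b)$ has as objects the objects $e$ with $Pe=b$, as 1-morphisms the 1-morphisms $h$ of $\mathcal{E}$ with $Ph=\mathrm{id}_b$, and as 2-morphisms the 2-morphisms $\alpha$ of $\mathcal{E}$ with $P\alpha=\mathrm{id}_{\mathrm{id}_b}$, with vertical composition as in $\mathcal{E}$. The composite $g\,\hat\circ\, f$ of 1-morphisms is the domain of the chosen cartesian lift (for the functor $P:\mathcal{E}(x,z)\to\mathcal{B}(b,b)$) at $g\circ f$ of the 2-morphism $\mathrm{id}_b\Rightarrow\mathrm{id}_b\circ\mathrm{id}_b = Pg\circ Pf\Rightarrow P(g\circ f)$ (inverse unitor followed by $\varphi_{g,f}$); horizontal composition of 2-morphisms, identities and coherence isomorphisms are induced by the universal property of these lifts. A pseudogroupoid is a bicategory in which every 1-morphism is an equivalence (has a pseudo-inverse $g$ with $g\circ f\cong\mathrm{id}$, $f\circ g\cong\mathrm{id}$) and every 2-morphism is invertible. *)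

theory Defs
  imports Main
begin

section \<open>Bicategories (globular presentation)\<close>

text \<open>A bicategory is given by a set of objects, a set of 1-cells with source and
target, a set of 2-cells with domain and codomain 1-cell, identities, composition
of 1-cells (cmp g f = g o f), vertical composition (vcmp beta alpha = beta . alpha),
horizontal composition (hcmp beta alpha = beta * alpha), associators
asc h g f : (h o g) o f => h o (g o f), and unitors lun f : id o f => f,
run f : f o id => f.  Operations are total HOL functions, only meaningful on
well-typed arguments.\<close>

record ('o,'a,'c) bicat =
  ob   :: "'o set"
  ar   :: "'a set"
  ce   :: "'c set"
  bsrc :: "'a \<Rightarrow> 'o"
  btrg :: "'a \<Rightarrow> 'o"
  dom2 :: "'c \<Rightarrow> 'a"
  cod2 :: "'c \<Rightarrow> 'a"
  idm  :: "'o \<Rightarrow> 'a"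
  cmp  :: "'a \<Rightarrow> 'a \<Rightarrow> 'a"
  idc  :: "'a \<Rightarrow> 'c"
  vcmp :: "'c \<Rightarrow> 'c \<Rightarrow> 'c"
  hcmp :: "'c \<Rightarrow> 'c \<Rightarrow> 'c"
  asc  :: "'a \<Rightarrow> 'a \<Rightarrow> 'a \<Rightarrow> 'c"
  lun  :: "'a \<Rightarrow> 'c"
  run  :: "'a \<Rightarrow> 'c"

definition iso2 :: "('o,'a,'c) bicat \<Rightarrow> 'c \<Rightarrow> bool" where
  "iso2 B \<alpha> \<longleftrightarrow> \<alpha> \<in> ce B \<and>
     (\<exists>\<beta>\<in>ce B. dom2 B \<beta> = cod2 B \<alpha> \<and> cod2 B \<beta> = dom2 B \<alpha> \<and>
        vcmp B \<beta> \<alpha> = idc B (dom2 B \<alpha>) \<and> vcmp B \<alpha> \<beta> = idc B (cod2 B \<alpha>))"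

definition inv2 :: "('o,'a,'c) bicat \<Rightarrow> 'c \<Rightarrow> 'c" where
  "inv2 B \<alpha> = (THE \<beta>. \<beta> \<in> ce B \<and> dom2 B \<beta> = cod2 B \<alpha> \<and> cod2 B \<beta> = dom2 B \<alpha> \<and>
        vcmp B \<beta> \<alpha> = idc B (dom2 B \<alpha>) \<and> vcmp B \<alpha> \<beta> = idc B (cod2 B \<alpha>))"

definition bicat :: "('o,'a,'c) bicat \<Rightarrow> bool" where
  "bicat B \<longleftrightarrow>
    (\<forall>f\<in>ar B. bsrc B f \<in> ob B \<and> btrg B f \<in> ob B) \<and>
    (\<forall>\<alpha>\<in>ce B. dom2 B \<alpha> \<in> ar B \<and> cod2 B \<alpha> \<in> ar B \<and>
        bsrc B (dom2 B \<alpha>) = bsrc B (cod2 B \<alpha>) \<and> btrg B (dom2 B \<alpha>) = btrg B (cod2 B \<alpha>)) \<and>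
    (\<forall>x\<in>ob B. idm B x \<in> ar B \<and> bsrc B (idm B x) = x \<and> btrg B (idm B x) = x) \<and>
    (\<forall>f\<in>ar B. \<forall>g\<in>ar B. bsrc B g = btrg B f \<longrightarrow>
        cmp B g f \<in> ar B \<and> bsrc B (cmp B g f) = bsrc B f \<and> btrg B (cmp B g f) = btrg B g) \<and>
    (\<forall>f\<in>ar B. idc B f \<in> ce B \<and> dom2 B (idc B f) = f \<and> cod2 B (idc B f) = f) \<and>
    (\<forall>\<alpha>\<in>ce B. \<forall>\<beta>\<in>ce B. dom2 B \<beta> = cod2 B \<alpha> \<longrightarrow>
        vcmp B \<beta> \<alpha> \<in> ce B \<and> dom2 B (vcmp B \<beta> \<alpha>) = dom2 B \<alpha> \<and> cod2 B (vcmp B \<beta> \<alpha>) = cod2 B \<beta>) \<and>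
    (\<forall>\<alpha>\<in>ce B. vcmp B (idc B (cod2 B \<alpha>)) \<alpha> = \<alpha> \<and> vcmp B \<alpha> (idc B (dom2 B \<alpha>)) = \<alpha>) \<and>
    (\<forall>\<alpha>\<in>ce B. \<forall>\<beta>\<in>ce B. \<forall>\<gamma>\<in>ce B. dom2 B \<beta> = cod2 B \<alpha> \<longrightarrow> dom2 B \<gamma> = cod2 B \<beta> \<longrightarrow>
        vcmp B \<gamma> (vcmp B \<beta> \<alpha>) = vcmp B (vcmp B \<gamma> \<beta>) \<alpha>) \<and>
    (\<forall>\<alpha>\<in>ce B. \<forall>\<beta>\<in>ce B. bsrc B (dom2 B \<beta>) = btrg B (dom2 B \<alpha>) \<longrightarrow>
        hcmp B \<beta> \<alpha> \<in> ce B \<and> dom2 B (hcmp B \<beta> \<alpha>) = cmp B (dom2 B \<beta>) (dom2 B \<alpha>) \<and>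
        cod2 B (hcmp B \<beta> \<alpha>) = cmp B (cod2 B \<beta>) (cod2 B \<alpha>)) \<and>
    (\<forall>f\<in>ar B. \<forall>g\<in>ar B. bsrc B g = btrg B f \<longrightarrow> hcmp B (idc B g) (idc B f) = idc B (cmp B g f)) \<and>
    (\<forall>\<alpha>\<in>ce B. \<forall>\<alpha>'\<in>ce B. \<forall>\<beta>\<in>ce B. \<forall>\<beta>'\<in>ce B.
        dom2 B \<alpha>' = cod2 B \<alpha> \<longrightarrow> dom2 B \<beta>' = cod2 B \<beta> \<longrightarrow> bsrc B (dom2 B \<beta>) = btrg B (dom2 B \<alpha>) \<longrightarrow>
        hcmp B (vcmp B \<beta>' \<beta>) (vcmp B \<alpha>' \<alpha>) = vcmp B (hcmp B \<beta>' \<alpha>') (hcmp B \<beta> \<alpha>)) \<and>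
    (\<forall>f\<in>ar B. \<forall>g\<in>ar B. \<forall>h\<in>ar B. bsrc B g = btrg B f \<longrightarrow> bsrc B h = btrg B g \<longrightarrow>
        iso2 B (asc B h g f) \<and> dom2 B (asc B h g f) = cmp B (cmp B h g) f \<and>
        cod2 B (asc B h g f) = cmp B h (cmp B g f)) \<and>
    (\<forall>\<alpha>\<in>ce B. \<forall>\<beta>\<in>ce B. \<forall>\<gamma>\<in>ce B.
        bsrc B (dom2 B \<beta>) = btrg B (dom2 B \<alpha>) \<longrightarrow> bsrc B (dom2 B \<gamma>) = btrg B (dom2 B \<beta>) \<longrightarrow>
        vcmp B (asc B (cod2 B \<gamma>) (cod2 B \<beta>) (cod2 B \<alpha>)) (hcmp B (hcmp B \<gamma> \<beta>) \<alpha>) =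
        vcmp B (hcmp B \<gamma> (hcmp B \<beta> \<alpha>)) (asc B (dom2 B \<gamma>) (dom2 B \<beta>) (dom2 B \<alpha>))) \<and>
    (\<forall>f\<in>ar B. iso2 B (lun B f) \<and> dom2 B (lun B f) = cmp B (idm B (btrg B f)) f \<and> cod2 B (lun B f) = f) \<and>
    (\<forall>f\<in>ar B. iso2 B (run B f) \<and> dom2 B (run B f) = cmp B f (idm B (bsrc B f)) \<and> cod2 B (run B f) = f) \<and>
    (\<forall>\<alpha>\<in>ce B. vcmp B \<alpha> (lun B (dom2 B \<alpha>)) =
        vcmp B (lun B (cod2 B \<alpha>)) (hcmp B (idc B (idm B (btrg B (dom2 B \<alpha>)))) \<alpha>)) \<and>
    (\<forall>\<alpha>\<in>ce B. vcmp B \<alpha> (run B (dom2 B \<alpha>)) =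
        vcmp B (run B (cod2 B \<alpha>)) (hcmp B \<alpha> (idc B (idm B (bsrc B (dom2 B \<alpha>)))))) \<and>
    (\<forall>f\<in>ar B. \<forall>g\<in>ar B. \<forall>h\<in>ar B. \<forall>k\<in>ar B.
        bsrc B g = btrg B f \<longrightarrow> bsrc B h = btrg B g \<longrightarrow> bsrc B k = btrg B h \<longrightarrow>
        vcmp B (hcmp B (idc B k) (asc B h g f))
          (vcmp B (asc B k (cmp B h g) f) (hcmp B (asc B k h g) (idc B f))) =
        vcmp B (asc B k h (cmp B g f)) (asc B (cmp B k h) g f)) \<and>
    (\<forall>f\<in>ar B. \<forall>g\<in>ar B. bsrc B g = btrg B f \<longrightarrow>
        vcmp B (hcmp B (idc B g) (lun B f)) (asc B g (idm B (btrg B f)) f) =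
        hcmp B (run B g) (idc B f))"

text \<open>phi g f : P g o P f => P (g o f);  phi0 x : id_{P x} => P (id_x).\<close>

record ('o,'a,'c,'p,'q,'r) laxf =
  fo   :: "'o \<Rightarrow> 'p"
  f1   :: "'a \<Rightarrow> 'q"
  f2   :: "'c \<Rightarrow> 'r"
  phi  :: "'a \<Rightarrow> 'a \<Rightarrow> 'r"
  phi0 :: "'o \<Rightarrow> 'r"

definition lax_functor ::
  "('o,'a,'c) bicat \<Rightarrow> ('p,'q,'r) bicat \<Rightarrow> ('o,'a,'c,'p,'q,'r) laxf \<Rightarrow> bool" where
  "lax_functor E B P \<longleftrightarrow> bicat E \<and> bicat B \<and>
    (\<forall>x\<in>ob E. fo P x \<in> ob B) \<and>
    (\<forall>f\<in>ar E. f1 P f \<in> ar B \<and> bsrc B (f1 P f) = fo P (bsrc E f) \<and> btrg B (f1 P f) = fo P (btrg E f)) \<and>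
    (\<forall>\<alpha>\<in>ce E. f2 P \<alpha> \<in> ce B \<and> dom2 B (f2 P \<alpha>) = f1 P (dom2 E \<alpha>) \<and> cod2 B (f2 P \<alpha>) = f1 P (cod2 E \<alpha>)) \<and>
    (\<forall>f\<in>ar E. f2 P (idc E f) = idc B (f1 P f)) \<and>
    (\<forall>\<alpha>\<in>ce E. \<forall>\<beta>\<in>ce E. dom2 E \<beta> = cod2 E \<alpha> \<longrightarrow> f2 P (vcmp E \<beta> \<alpha>) = vcmp B (f2 P \<beta>) (f2 P \<alpha>)) \<and>
    (\<forall>f\<in>ar E. \<forall>g\<in>ar E. bsrc E g = btrg E f \<longrightarrow>
        phi P g f \<in> ce B \<and> dom2 B (phi P g f) = cmp B (f1 P g) (f1 P f) \<and>
        cod2 B (phi P g f) = f1 P (cmp E g f)) \<and>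
    (\<forall>\<alpha>\<in>ce E. \<forall>\<beta>\<in>ce E. bsrc E (dom2 E \<beta>) = btrg E (dom2 E \<alpha>) \<longrightarrow>
        vcmp B (f2 P (hcmp E \<beta> \<alpha>)) (phi P (dom2 E \<beta>) (dom2 E \<alpha>)) =
        vcmp B (phi P (cod2 E \<beta>) (cod2 E \<alpha>)) (hcmp B (f2 P \<beta>) (f2 P \<alpha>))) \<and>
    (\<forall>x\<in>ob E. phi0 P x \<in> ce B \<and> dom2 B (phi0 P x) = idm B (fo P x) \<and> cod2 B (phi0 P x) = f1 P (idm E x)) \<and>
    (\<forall>f\<in>ar E. \<forall>g\<in>ar E. \<forall>h\<in>ar E. bsrc E g = btrg E f \<longrightarrow> bsrc E h = btrg E g \<longrightarrow>
        vcmp B (f2 P (asc E h g f))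
          (vcmp B (phi P (cmp E h g) f) (hcmp B (phi P h g) (idc B (f1 P f)))) =
        vcmp B (phi P h (cmp E g f))
          (vcmp B (hcmp B (idc B (f1 P h)) (phi P g f)) (asc B (f1 P h) (f1 P g) (f1 P f)))) \<and>
    (\<forall>f\<in>ar E. vcmp B (f2 P (lun E f))
          (vcmp B (phi P (idm E (btrg E f)) f) (hcmp B (phi0 P (btrg E f)) (idc B (f1 P f)))) =
        lun B (f1 P f)) \<and>
    (\<forall>f\<in>ar E. vcmp B (f2 P (run E f))
          (vcmp B (phi P f (idm E (bsrc E f))) (hcmp B (idc B (f1 P f)) (phi0 P (bsrc E f)))) =
        run B (f1 P f))"

definition is_lift ::
  "('o,'a,'c) bicat \<Rightarrow> ('p,'q,'r) bicat \<Rightarrow> ('o,'a,'c,'p,'q,'r) laxf \<Rightarrow>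
   'a \<Rightarrow> 'a \<Rightarrow> 'q \<Rightarrow> 'r \<Rightarrow> 'a \<Rightarrow> 'c \<Rightarrow> 'r \<Rightarrow> bool" where
  "is_lift E B P f g h \<alpha> ht at bt \<longleftrightarrow>
     ht \<in> ar E \<and> bsrc E ht = bsrc E g \<and> btrg E ht = bsrc E f \<and>
     iso2 E at \<and> dom2 E at = cmp E f ht \<and> cod2 E at = g \<and>
     iso2 B bt \<and> dom2 B bt = f1 P ht \<and> cod2 B bt = h \<and>
     vcmp B \<alpha> (hcmp B (idc B (f1 P f)) bt) = vcmp B (f2 P at) (phi P f ht)"

definition cartesian ::
  "('o,'a,'c) bicat \<Rightarrow> ('p,'q,'r) bicat \<Rightarrow> ('o,'a,'c,'p,'q,'r) laxf \<Rightarrow> 'a \<Rightarrow> bool" where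
  "cartesian E B P f \<longleftrightarrow> f \<in> ar E \<and>
    (\<forall>g\<in>ar E. \<forall>h\<in>ar B. \<forall>\<alpha>.
        btrg E g = btrg E f \<longrightarrow>
        bsrc B h = fo P (bsrc E g) \<longrightarrow> btrg B h = fo P (bsrc E f) \<longrightarrow>
        iso2 B \<alpha> \<longrightarrow> dom2 B \<alpha> = cmp B (f1 P f) h \<longrightarrow> cod2 B \<alpha> = f1 P g \<longrightarrow>
        (\<exists>ht at bt. is_lift E B P f g h \<alpha> ht at bt)) \<and>
    (\<forall>g g' \<sigma> h h' \<alpha> \<alpha>' ht at bt ht' at' bt' \<delta>.
        g \<in> ar E \<longrightarrow> g' \<in> ar E \<longrightarrow> btrg E g = btrg E f \<longrightarrow>
        \<sigma> \<in> ce E \<longrightarrow> dom2 E \<sigma> = g \<longrightarrow> cod2 E \<sigma> = g' \<longrightarrow>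
        h \<in> ar B \<longrightarrow> bsrc B h = fo P (bsrc E g) \<longrightarrow> btrg B h = fo P (bsrc E f) \<longrightarrow>
        h' \<in> ar B \<longrightarrow> bsrc B h' = fo P (bsrc E g') \<longrightarrow> btrg B h' = fo P (bsrc E f) \<longrightarrow>
        iso2 B \<alpha> \<longrightarrow> dom2 B \<alpha> = cmp B (f1 P f) h \<longrightarrow> cod2 B \<alpha> = f1 P g \<longrightarrow>
        iso2 B \<alpha>' \<longrightarrow> dom2 B \<alpha>' = cmp B (f1 P f) h' \<longrightarrow> cod2 B \<alpha>' = f1 P g' \<longrightarrow>
        is_lift E B P f g h \<alpha> ht at bt \<longrightarrow>
        is_lift E B P f g' h' \<alpha>' ht' at' bt' \<longrightarrow>
        \<delta> \<in> ce B \<longrightarrow> dom2 B \<delta> = h \<longrightarrow> cod2 B \<delta> = h' \<longrightarrow>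
        vcmp B \<alpha>' (hcmp B (idc B (f1 P f)) \<delta>) = vcmp B (f2 P \<sigma>) \<alpha> \<longrightarrow>
        (\<exists>!\<delta>t. \<delta>t \<in> ce E \<and> dom2 E \<delta>t = ht \<and> cod2 E \<delta>t = ht' \<and>
            vcmp E at' (hcmp E (idc E f) \<delta>t) = vcmp E \<sigma> at \<and>
            vcmp B bt' (f2 P \<delta>t) = vcmp B \<delta> bt))"

text \<open>Each local functor P : E(x,y) -> B(Px,Py) is fibered in groupoids: every
2-cell is cartesian (1-categorically) and every 2-cell of B into P u lifts to a
2-cell into u.  (Two 2-cells with a common codomain lie in the same hom-category.)\<close>

definition locally_fibered_in_groupoids ::
  "('o,'a,'c) bicat \<Rightarrow> ('p,'q,'r) bicat \<Rightarrow> ('o,'a,'c,'p,'q,'r) laxf \<Rightarrow> bool" where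
  "locally_fibered_in_groupoids E B P \<longleftrightarrow>
    (\<forall>\<theta>\<in>ce E. \<forall>\<psi>\<in>ce E. \<forall>\<chi>\<in>ce B.
        cod2 E \<psi> = cod2 E \<theta> \<longrightarrow>
        dom2 B \<chi> = f1 P (dom2 E \<psi>) \<longrightarrow> cod2 B \<chi> = f1 P (dom2 E \<theta>) \<longrightarrow>
        vcmp B (f2 P \<theta>) \<chi> = f2 P \<psi> \<longrightarrow>
        (\<exists>!\<xi>. \<xi> \<in> ce E \<and> dom2 E \<xi> = dom2 E \<psi> \<and> cod2 E \<xi> = dom2 E \<theta> \<and>
             vcmp E \<theta> \<xi> = \<psi> \<and> f2 P \<xi> = \<chi>)) \<and>
    (\<forall>u\<in>ar E. \<forall>\<kappa>\<in>ce B. cod2 B \<kappa> = f1 P u \<longrightarrow>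
        (\<exists>\<theta>\<in>ce E. cod2 E \<theta> = u \<and> f2 P \<theta> = \<kappa>))"

definition fibered_in_pseudogroupoids ::
  "('o,'a,'c) bicat \<Rightarrow> ('p,'q,'r) bicat \<Rightarrow> ('o,'a,'c,'p,'q,'r) laxf \<Rightarrow> bool" where
  "fibered_in_pseudogroupoids E B P \<longleftrightarrow> lax_functor E B P \<and>
    (\<forall>f\<in>ar E. cartesian E B P f) \<and>
    (\<forall>e\<in>ob E. \<forall>f\<in>ar B. btrg B f = fo P e \<longrightarrow> (\<exists>ft\<in>ar E. btrg E ft = e \<and> f1 P ft = f)) \<and>
    locally_fibered_in_groupoids E B P"

text \<open>A cleavage for the local functors: cl u kappa is a chosen lift of
kappa : _ => P u to a 2-cell with codomain u (it is cartesian automatically).\<close>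

definition local_cleavage ::
  "('o,'a,'c) bicat \<Rightarrow> ('p,'q,'r) bicat \<Rightarrow> ('o,'a,'c,'p,'q,'r) laxf \<Rightarrow> ('a \<Rightarrow> 'r \<Rightarrow> 'c) \<Rightarrow> bool" where
  "local_cleavage E B P cl \<longleftrightarrow>
    (\<forall>u\<in>ar E. \<forall>\<kappa>\<in>ce B. cod2 B \<kappa> = f1 P u \<longrightarrow>
        cl u \<kappa> \<in> ce E \<and> cod2 E (cl u \<kappa>) = u \<and> f2 P (cl u \<kappa>) = \<kappa>)"

section \<open>The fiber bicategory P^{-1}(b) (the data relevant to being a pseudogroupoid)\<close>

definition fib_ob where
  "fib_ob E B P b = {e \<in> ob E. fo P e = b}"

definition fib_ar where
  "fib_ar E B P b = {h \<in> ar E. f1 P h = idm B b}"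

definition fib_ce where
  "fib_ce E B P b = {\<alpha> \<in> ce E. f2 P \<alpha> = idc B (idm B b)}"

text \<open>Composite g ^o f: domain of the chosen lift at g o f of
id_b => id_b o id_b = Pg o Pf => P(g o f).\<close>

definition fib_cmp where
  "fib_cmp E B P cl b g f =
     dom2 E (cl (cmp E g f) (vcmp B (phi P g f) (inv2 B (lun B (idm B b)))))"

text \<open>Identity of e in the fiber: domain of the chosen lift at id_e of phi0 e : id_b => P(id_e).\<close>

definition fib_id where
  "fib_id E B P cl e = dom2 E (cl (idm E e) (phi0 P e))"

definition fib_iso where
  "fib_iso E B P b \<alpha> \<longleftrightarrow> \<alpha> \<in> fib_ce E B P b \<and>
     (\<exists>\<beta>\<in>fib_ce E B P b. dom2 E \<beta> = cod2 E \<alpha> \<and> cod2 E \<beta> = dom2 E \<alpha> \<and>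
        vcmp E \<beta> \<alpha> = idc E (dom2 E \<alpha>) \<and> vcmp E \<alpha> \<beta> = idc E (cod2 E \<alpha>))"

definition fiber_is_pseudogroupoid where
  "fiber_is_pseudogroupoid E B P cl b \<longleftrightarrow>
    (\<forall>h\<in>fib_ar E B P b. \<exists>g\<in>fib_ar E B P b.
        bsrc E g = btrg E h \<and> btrg E g = bsrc E h \<and>
        (\<exists>\<alpha>. fib_iso E B P b \<alpha> \<and> dom2 E \<alpha> = fib_cmp E B P cl b g h \<and> cod2 E \<alpha> = fib_id E B P cl (bsrc E h)) \<and>
        (\<exists>\<alpha>. fib_iso E B P b \<alpha> \<and> dom2 E \<alpha> = fib_cmp E B P cl b h g \<and> cod2 E \<alpha> = fib_id E B P cl (btrg E h))) \<and>
    (\<forall>\<alpha>\<in>fib_ce E B P b. fib_iso E B P b \<alpha>)"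

end

theory Submission
  imports Defs
begin

text \<open>
A 2-cell of the fiber lies over an identity; since each local functor is fibered in groupoids
it reflects isomorphisms, so the 2-cell is invertible and its inverse again lies in the fiber.
For a 1-cell \<open>h\<close> of the fiber, lifting the unitor \<open>id \<circ> id \<Rightarrow> id\<close> along the cartesian
1-cell \<open>h\<close> gives \<open>g\<close> with \<open>h g \<cong> 1\<close>; repeating this for \<open>g\<close> gives \<open>k\<close> with \<open>g k \<cong> 1\<close>. The
coherence of the lax functor, together with \<open>\<lambda>\<^sub>1 = \<rho>\<^sub>1\<close> in the base, shows that
\<open>h \<cong> (h g) k \<cong> k\<close> over the identity, whence also \<open>g h \<cong> 1\<close>. The universal property of the
chosen local lifts transports these isomorphisms to the composites and identities of the fiber.
\<close>

locale bicategory =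
  fixes B :: "('o,'a,'c) bicat"
  assumes bicat: "bicat B"
begin

lemma ar_src_trg [rule_format, simp]: "\<forall>f\<in>ar B. bsrc B f \<in> ob B \<and> btrg B f \<in> ob B"
  using bicat unfolding bicat_def by (elim conjE) assumption

lemma ce_dom_cod [rule_format]:
  "\<forall>\<alpha>\<in>ce B. dom2 B \<alpha> \<in> ar B \<and> cod2 B \<alpha> \<in> ar B \<and>
     bsrc B (dom2 B \<alpha>) = bsrc B (cod2 B \<alpha>) \<and> btrg B (dom2 B \<alpha>) = btrg B (cod2 B \<alpha>)"
  using bicat unfolding bicat_def by (elim conjE) assumption

lemma idm_typing [rule_format, simp]:
  "\<forall>x\<in>ob B. idm B x \<in> ar B \<and> bsrc B (idm B x) = x \<and> btrg B (idm B x) = x"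
  using bicat unfolding bicat_def by (elim conjE) assumption

lemma cmp_typing [rule_format, simp]:
  "\<forall>f\<in>ar B. \<forall>g\<in>ar B. bsrc B g = btrg B f \<longrightarrow>
     cmp B g f \<in> ar B \<and> bsrc B (cmp B g f) = bsrc B f \<and> btrg B (cmp B g f) = btrg B g"
  using bicat unfolding bicat_def by (elim conjE) assumption

lemma idc_typing [rule_format, simp]:
  "\<forall>f\<in>ar B. idc B f \<in> ce B \<and> dom2 B (idc B f) = f \<and> cod2 B (idc B f) = f"
  using bicat unfolding bicat_def by (elim conjE) assumption

lemma vcmp_typing [rule_format, simp]:
  "\<forall>\<alpha>\<in>ce B. \<forall>\<beta>\<in>ce B. dom2 B \<beta> = cod2 B \<alpha> \<longrightarrow>
     vcmp B \<beta> \<alpha> \<in> ce B \<and> dom2 B (vcmp B \<beta> \<alpha>) = dom2 B \<alpha> \<and> cod2 B (vcmp B \<beta> \<alpha>) = cod2 B \<beta>"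
  using bicat unfolding bicat_def by (elim conjE) assumption

lemma vcmp_idc [rule_format]:
  "\<forall>\<alpha>\<in>ce B. vcmp B (idc B (cod2 B \<alpha>)) \<alpha> = \<alpha> \<and> vcmp B \<alpha> (idc B (dom2 B \<alpha>)) = \<alpha>"
  using bicat unfolding bicat_def by (elim conjE) assumption

lemma vcmp_assoc [rule_format]:
  "\<forall>\<alpha>\<in>ce B. \<forall>\<beta>\<in>ce B. \<forall>\<gamma>\<in>ce B. dom2 B \<beta> = cod2 B \<alpha> \<longrightarrow> dom2 B \<gamma> = cod2 B \<beta> \<longrightarrow>
     vcmp B \<gamma> (vcmp B \<beta> \<alpha>) = vcmp B (vcmp B \<gamma> \<beta>) \<alpha>"
  using bicat unfolding bicat_def by (elim conjE) assumption

lemma hcmp_typing [rule_format, simp]: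
  "\<forall>\<alpha>\<in>ce B. \<forall>\<beta>\<in>ce B. bsrc B (dom2 B \<beta>) = btrg B (dom2 B \<alpha>) \<longrightarrow>
     hcmp B \<beta> \<alpha> \<in> ce B \<and> dom2 B (hcmp B \<beta> \<alpha>) = cmp B (dom2 B \<beta>) (dom2 B \<alpha>) \<and>
     cod2 B (hcmp B \<beta> \<alpha>) = cmp B (cod2 B \<beta>) (cod2 B \<alpha>)"
  using bicat unfolding bicat_def by (elim conjE) assumption

lemma hcmp_idc [rule_format]:
  "\<forall>f\<in>ar B. \<forall>g\<in>ar B. bsrc B g = btrg B f \<longrightarrow> hcmp B (idc B g) (idc B f) = idc B (cmp B g f)"
  using bicat unfolding bicat_def by (elim conjE) assumption

lemma interchange [rule_format]:
  "\<forall>\<alpha>\<in>ce B. \<forall>\<alpha>'\<in>ce B. \<forall>\<beta>\<in>ce B. \<forall>\<beta>'\<in>ce B.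
     dom2 B \<alpha>' = cod2 B \<alpha> \<longrightarrow> dom2 B \<beta>' = cod2 B \<beta> \<longrightarrow> bsrc B (dom2 B \<beta>) = btrg B (dom2 B \<alpha>) \<longrightarrow>
     hcmp B (vcmp B \<beta>' \<beta>) (vcmp B \<alpha>' \<alpha>) = vcmp B (hcmp B \<beta>' \<alpha>') (hcmp B \<beta> \<alpha>)"
  using bicat unfolding bicat_def by (elim conjE) assumption

lemma asc_typing [rule_format]:
  "\<forall>f\<in>ar B. \<forall>g\<in>ar B. \<forall>h\<in>ar B. bsrc B g = btrg B f \<longrightarrow> bsrc B h = btrg B g \<longrightarrow>
     iso2 B (asc B h g f) \<and> dom2 B (asc B h g f) = cmp B (cmp B h g) f \<and>
     cod2 B (asc B h g f) = cmp B h (cmp B g f)"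
  using bicat unfolding bicat_def by (elim conjE) assumption

lemma asc_natural [rule_format]:
  "\<forall>\<alpha>\<in>ce B. \<forall>\<beta>\<in>ce B. \<forall>\<gamma>\<in>ce B.
     bsrc B (dom2 B \<beta>) = btrg B (dom2 B \<alpha>) \<longrightarrow> bsrc B (dom2 B \<gamma>) = btrg B (dom2 B \<beta>) \<longrightarrow>
     vcmp B (asc B (cod2 B \<gamma>) (cod2 B \<beta>) (cod2 B \<alpha>)) (hcmp B (hcmp B \<gamma> \<beta>) \<alpha>) =
     vcmp B (hcmp B \<gamma> (hcmp B \<beta> \<alpha>)) (asc B (dom2 B \<gamma>) (dom2 B \<beta>) (dom2 B \<alpha>))"
  using bicat unfolding bicat_def by (elim conjE) assumption

lemma lun_typing [rule_format]:
  "\<forall>f\<in>ar B. iso2 B (lun B f) \<and> dom2 B (lun B f) = cmp B (idm B (btrg B f)) f \<and> cod2 B (lun B f) = f"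
  using bicat unfolding bicat_def by (elim conjE) assumption

lemma run_typing [rule_format]:
  "\<forall>f\<in>ar B. iso2 B (run B f) \<and> dom2 B (run B f) = cmp B f (idm B (bsrc B f)) \<and> cod2 B (run B f) = f"
  using bicat unfolding bicat_def by (elim conjE) assumption

lemma lun_natural [rule_format]:
  "\<forall>\<alpha>\<in>ce B. vcmp B \<alpha> (lun B (dom2 B \<alpha>)) =
     vcmp B (lun B (cod2 B \<alpha>)) (hcmp B (idc B (idm B (btrg B (dom2 B \<alpha>)))) \<alpha>)"
  using bicat unfolding bicat_def by (elim conjE) assumption

lemma run_natural [rule_format]:
  "\<forall>\<alpha>\<in>ce B. vcmp B \<alpha> (run B (dom2 B \<alpha>)) =
     vcmp B (run B (cod2 B \<alpha>)) (hcmp B \<alpha> (idc B (idm B (bsrc B (dom2 B \<alpha>)))))"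
  using bicat unfolding bicat_def by (elim conjE) assumption

lemma pentagon [rule_format]:
  "\<forall>f\<in>ar B. \<forall>g\<in>ar B. \<forall>h\<in>ar B. \<forall>k\<in>ar B.
     bsrc B g = btrg B f \<longrightarrow> bsrc B h = btrg B g \<longrightarrow> bsrc B k = btrg B h \<longrightarrow>
     vcmp B (hcmp B (idc B k) (asc B h g f))
       (vcmp B (asc B k (cmp B h g) f) (hcmp B (asc B k h g) (idc B f))) =
     vcmp B (asc B k h (cmp B g f)) (asc B (cmp B k h) g f)"
  using bicat unfolding bicat_def by (elim conjE) assumption

lemma triangle [rule_format]:
  "\<forall>f\<in>ar B. \<forall>g\<in>ar B. bsrc B g = btrg B f \<longrightarrow>
     vcmp B (hcmp B (idc B g) (lun B f)) (asc B g (idm B (btrg B f)) f) = hcmp B (run B g) (idc B f)"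
  using bicat unfolding bicat_def by (elim conjE) assumption

lemma ce_typing [simp]:
  "\<alpha> \<in> ce B \<Longrightarrow> dom2 B \<alpha> \<in> ar B \<and> cod2 B \<alpha> \<in> ar B \<and>
     bsrc B (cod2 B \<alpha>) = bsrc B (dom2 B \<alpha>) \<and> btrg B (cod2 B \<alpha>) = btrg B (dom2 B \<alpha>)"
  using ce_dom_cod by simp

lemma vcmp_idc_left [simp]: "\<alpha> \<in> ce B \<Longrightarrow> cod2 B \<alpha> = f \<Longrightarrow> vcmp B (idc B f) \<alpha> = \<alpha>"
  and vcmp_idc_right [simp]: "\<alpha> \<in> ce B \<Longrightarrow> dom2 B \<alpha> = f \<Longrightarrow> vcmp B \<alpha> (idc B f) = \<alpha>"
  using vcmp_idc by auto

lemma iso2_in_ce [simp]: "iso2 B \<alpha> \<Longrightarrow> \<alpha> \<in> ce B"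
  unfolding iso2_def by blast

lemma iso2_asc: "f \<in> ar B \<Longrightarrow> g \<in> ar B \<Longrightarrow> h \<in> ar B \<Longrightarrow> bsrc B g = btrg B f \<Longrightarrow> bsrc B h = btrg B g \<Longrightarrow>
    iso2 B (asc B h g f)"
  and iso2_lun: "f \<in> ar B \<Longrightarrow> iso2 B (lun B f)"
  and iso2_run: "f \<in> ar B \<Longrightarrow> iso2 B (run B f)"
  using asc_typing lun_typing run_typing by blast+

lemma coherence_typing [simp]:
  "f \<in> ar B \<Longrightarrow> g \<in> ar B \<Longrightarrow> h \<in> ar B \<Longrightarrow> bsrc B g = btrg B f \<Longrightarrow> bsrc B h = btrg B g \<Longrightarrow>
     asc B h g f \<in> ce B \<and> dom2 B (asc B h g f) = cmp B (cmp B h g) f \<and>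
     cod2 B (asc B h g f) = cmp B h (cmp B g f)"
  "f \<in> ar B \<Longrightarrow> lun B f \<in> ce B \<and> dom2 B (lun B f) = cmp B (idm B (btrg B f)) f \<and> cod2 B (lun B f) = f"
  "f \<in> ar B \<Longrightarrow> run B f \<in> ce B \<and> dom2 B (run B f) = cmp B f (idm B (bsrc B f)) \<and> cod2 B (run B f) = f"
  using asc_typing lun_typing run_typing by auto

lemma inverse_unique:
  assumes "\<alpha> \<in> ce B"
    and "\<beta> \<in> ce B" "dom2 B \<beta> = cod2 B \<alpha>" "cod2 B \<beta> = dom2 B \<alpha>" "vcmp B \<beta> \<alpha> = idc B (dom2 B \<alpha>)"
    and "\<beta>' \<in> ce B" "dom2 B \<beta>' = cod2 B \<alpha>" "cod2 B \<beta>' = dom2 B \<alpha>" "vcmp B \<alpha> \<beta>' = idc B (cod2 B \<alpha>)"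
  shows "\<beta> = \<beta>'"
proof -
  have "\<beta> = vcmp B \<beta> (vcmp B \<alpha> \<beta>')" using assms by simp
  also have "\<dots> = vcmp B (vcmp B \<beta> \<alpha>) \<beta>'" using assms by (intro vcmp_assoc) auto
  also have "\<dots> = \<beta>'" using assms by simp
  finally show ?thesis .
qed

lemma inv2_props:
  assumes "iso2 B \<alpha>"
  shows "inv2 B \<alpha> \<in> ce B \<and> dom2 B (inv2 B \<alpha>) = cod2 B \<alpha> \<and> cod2 B (inv2 B \<alpha>) = dom2 B \<alpha> \<and>
    vcmp B (inv2 B \<alpha>) \<alpha> = idc B (dom2 B \<alpha>) \<and> vcmp B \<alpha> (inv2 B \<alpha>) = idc B (cod2 B \<alpha>)"
proof -
  have "\<exists>!\<beta>. \<beta> \<in> ce B \<and> dom2 B \<beta> = cod2 B \<alpha> \<and> cod2 B \<beta> = dom2 B \<alpha> \<and>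
      vcmp B \<beta> \<alpha> = idc B (dom2 B \<alpha>) \<and> vcmp B \<alpha> \<beta> = idc B (cod2 B \<alpha>)"
    using assms inverse_unique unfolding iso2_def by (metis (no_types, lifting))
  then show ?thesis unfolding inv2_def by (rule theI')
qed

lemma inv2_typing [simp]:
  "iso2 B \<alpha> \<Longrightarrow> inv2 B \<alpha> \<in> ce B \<and> dom2 B (inv2 B \<alpha>) = cod2 B \<alpha> \<and> cod2 B (inv2 B \<alpha>) = dom2 B \<alpha>"
  and vcmp_inv2_left [simp]: "iso2 B \<alpha> \<Longrightarrow> vcmp B (inv2 B \<alpha>) \<alpha> = idc B (dom2 B \<alpha>)"
  and vcmp_inv2_right [simp]: "iso2 B \<alpha> \<Longrightarrow> vcmp B \<alpha> (inv2 B \<alpha>) = idc B (cod2 B \<alpha>)"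
  using inv2_props by auto

lemma iso2_inv2:
  assumes "iso2 B \<alpha>"
  shows "iso2 B (inv2 B \<alpha>)"
proof -
  have "\<alpha> \<in> ce B \<and> dom2 B \<alpha> = cod2 B (inv2 B \<alpha>) \<and> cod2 B \<alpha> = dom2 B (inv2 B \<alpha>) \<and>
      vcmp B \<alpha> (inv2 B \<alpha>) = idc B (dom2 B (inv2 B \<alpha>)) \<and>
      vcmp B (inv2 B \<alpha>) \<alpha> = idc B (cod2 B (inv2 B \<alpha>))"
    using assms by simp
  then show ?thesis unfolding iso2_def using inv2_props[OF assms] by blast
qed

lemma iso2_idc:
  assumes "f \<in> ar B"
  shows "iso2 B (idc B f)"
proof -
  have "idc B f \<in> ce B \<and> dom2 B (idc B f) = cod2 B (idc B f) \<and> cod2 B (idc B f) = dom2 B (idc B f) \<and>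
      vcmp B (idc B f) (idc B f) = idc B (dom2 B (idc B f)) \<and>
      vcmp B (idc B f) (idc B f) = idc B (cod2 B (idc B f))"
    using assms by simp
  then show ?thesis unfolding iso2_def by blast
qed

lemma inv2_idc:
  assumes "f \<in> ar B"
  shows "inv2 B (idc B f) = idc B f"
proof -
  have "iso2 B (idc B f)" using assms by (rule iso2_idc)
  then show ?thesis
    using assms inv2_props[of "idc B f"]
    by (intro inverse_unique[of "idc B f" "inv2 B (idc B f)" "idc B f"]) simp_all
qed

lemma iso2_vcmp:
  assumes "iso2 B \<alpha>" "iso2 B \<beta>" "dom2 B \<beta> = cod2 B \<alpha>"
  shows "iso2 B (vcmp B \<beta> \<alpha>)"
proof -
  let ?i = "vcmp B (inv2 B \<alpha>) (inv2 B \<beta>)"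
  have "vcmp B ?i (vcmp B \<beta> \<alpha>) = vcmp B (inv2 B \<alpha>) (vcmp B (inv2 B \<beta>) (vcmp B \<beta> \<alpha>))"
    using assms by (intro vcmp_assoc[symmetric]) auto
  also have "\<dots> = vcmp B (inv2 B \<alpha>) (vcmp B (vcmp B (inv2 B \<beta>) \<beta>) \<alpha>)"
    using assms by (subst vcmp_assoc) auto
  also have "\<dots> = idc B (dom2 B \<alpha>)" using assms by simp
  finally have left: "vcmp B ?i (vcmp B \<beta> \<alpha>) = idc B (dom2 B \<alpha>)" .
  have "vcmp B (vcmp B \<beta> \<alpha>) ?i = vcmp B \<beta> (vcmp B \<alpha> ?i)"
    using assms by (intro vcmp_assoc[symmetric]) auto
  also have "\<dots> = vcmp B \<beta> (vcmp B (vcmp B \<alpha> (inv2 B \<alpha>)) (inv2 B \<beta>))"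
    using assms by (subst vcmp_assoc) auto
  also have "\<dots> = idc B (cod2 B \<beta>)" using assms by simp
  finally have right: "vcmp B (vcmp B \<beta> \<alpha>) ?i = idc B (cod2 B \<beta>)" .
  show ?thesis unfolding iso2_def
    using assms left right by (intro conjI bexI[of _ ?i]) simp_all
qed

lemma iso2_hcmp:
  assumes "iso2 B \<alpha>" "iso2 B \<beta>" "bsrc B (dom2 B \<beta>) = btrg B (dom2 B \<alpha>)"
  shows "iso2 B (hcmp B \<beta> \<alpha>)"
proof -
  let ?i = "hcmp B (inv2 B \<beta>) (inv2 B \<alpha>)"
  have "vcmp B ?i (hcmp B \<beta> \<alpha>) = idc B (cmp B (dom2 B \<beta>) (dom2 B \<alpha>))"
    and "vcmp B (hcmp B \<beta> \<alpha>) ?i = idc B (cmp B (cod2 B \<beta>) (cod2 B \<alpha>))"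
    using assms by (simp_all add: interchange[symmetric] hcmp_idc)
  then show ?thesis unfolding iso2_def
    using assms by (intro conjI bexI[of _ ?i]) simp_all
qed

lemma iso2_cancel_left:
  assumes "iso2 B \<alpha>" "\<beta> \<in> ce B" "\<gamma> \<in> ce B" "cod2 B \<beta> = dom2 B \<alpha>" "cod2 B \<gamma> = dom2 B \<alpha>"
    and eq: "vcmp B \<alpha> \<beta> = vcmp B \<alpha> \<gamma>"
  shows "\<beta> = \<gamma>"
proof -
  have "\<beta> = vcmp B (vcmp B (inv2 B \<alpha>) \<alpha>) \<beta>" using assms by simp
  also have "\<dots> = vcmp B (inv2 B \<alpha>) (vcmp B \<alpha> \<beta>)" using assms by (intro vcmp_assoc[symmetric]) auto
  also have "\<dots> = vcmp B (inv2 B \<alpha>) (vcmp B \<alpha> \<gamma>)" unfolding eq ..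
  also have "\<dots> = vcmp B (vcmp B (inv2 B \<alpha>) \<alpha>) \<gamma>" using assms by (intro vcmp_assoc) auto
  also have "\<dots> = \<gamma>" using assms by simp
  finally show ?thesis .
qed

lemma iso2_cancel_right:
  assumes "iso2 B \<alpha>" "\<beta> \<in> ce B" "\<gamma> \<in> ce B" "dom2 B \<beta> = cod2 B \<alpha>" "dom2 B \<gamma> = cod2 B \<alpha>"
    and eq: "vcmp B \<beta> \<alpha> = vcmp B \<gamma> \<alpha>"
  shows "\<beta> = \<gamma>"
proof -
  have "\<beta> = vcmp B \<beta> (vcmp B \<alpha> (inv2 B \<alpha>))" using assms by simp
  also have "\<dots> = vcmp B (vcmp B \<beta> \<alpha>) (inv2 B \<alpha>)" using assms by (intro vcmp_assoc) auto
  also have "\<dots> = vcmp B (vcmp B \<gamma> \<alpha>) (inv2 B \<alpha>)" unfolding eq ..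
  also have "\<dots> = vcmp B \<gamma> (vcmp B \<alpha> (inv2 B \<alpha>))" using assms by (intro vcmp_assoc[symmetric]) auto
  also have "\<dots> = \<gamma>" using assms by simp
  finally show ?thesis .
qed

lemma whisker_left_vcmp:
  assumes "g \<in> ar B" "\<beta> \<in> ce B" "\<alpha> \<in> ce B" "dom2 B \<beta> = cod2 B \<alpha>" "bsrc B g = btrg B (dom2 B \<alpha>)"
  shows "hcmp B (idc B g) (vcmp B \<beta> \<alpha>) = vcmp B (hcmp B (idc B g) \<beta>) (hcmp B (idc B g) \<alpha>)"
proof -
  have "hcmp B (vcmp B (idc B g) (idc B g)) (vcmp B \<beta> \<alpha>) =
      vcmp B (hcmp B (idc B g) \<beta>) (hcmp B (idc B g) \<alpha>)"
    using assms by (intro interchange) simp_all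
  then show ?thesis using assms by simp
qed

lemma whisker_right_vcmp:
  assumes "f \<in> ar B" "\<beta> \<in> ce B" "\<alpha> \<in> ce B" "dom2 B \<beta> = cod2 B \<alpha>" "bsrc B (dom2 B \<alpha>) = btrg B f"
  shows "hcmp B (vcmp B \<beta> \<alpha>) (idc B f) = vcmp B (hcmp B \<beta> (idc B f)) (hcmp B \<alpha> (idc B f))"
proof -
  have "hcmp B (vcmp B \<beta> \<alpha>) (vcmp B (idc B f) (idc B f)) =
      vcmp B (hcmp B \<beta> (idc B f)) (hcmp B \<alpha> (idc B f))"
    using assms by (intro interchange) simp_all
  then show ?thesis using assms by simp
qed

lemma whisker_idm_left_inj:
  assumes "\<alpha> \<in> ce B" "\<beta> \<in> ce B" "dom2 B \<alpha> = dom2 B \<beta>" "cod2 B \<alpha> = cod2 B \<beta>"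
    and y: "btrg B (dom2 B \<alpha>) = y"
    and eq: "hcmp B (idc B (idm B y)) \<alpha> = hcmp B (idc B (idm B y)) \<beta>"
  shows "\<alpha> = \<beta>"
proof -
  have "vcmp B \<alpha> (lun B (dom2 B \<alpha>)) = vcmp B (lun B (cod2 B \<alpha>)) (hcmp B (idc B (idm B y)) \<alpha>)"
    using lun_natural[OF assms(1)] y by simp
  also have "\<dots> = vcmp B \<beta> (lun B (dom2 B \<beta>))"
    unfolding eq using lun_natural[OF assms(2)] assms(3,4) y by simp
  finally have "vcmp B \<alpha> (lun B (dom2 B \<alpha>)) = vcmp B \<beta> (lun B (dom2 B \<alpha>))"
    using assms(3) by simp
  then show ?thesis
    by (rule iso2_cancel_right[OF iso2_lun[of "dom2 B \<alpha>"], rotated -1]) (use assms in simp_all)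
qed

context
  fixes x
  assumes x: "x \<in> ob B"
begin

private abbreviation "I \<equiv> idm B x"
private abbreviation "II \<equiv> cmp B I I"
private abbreviation "i \<equiv> idc B I"
private abbreviation "a \<equiv> asc B I I I"
private abbreviation "L \<equiv> lun B I"
private abbreviation "R \<equiv> run B I"

private lemma idm_facts [simp]: "I \<in> ar B" "bsrc B I = x" "btrg B I = x"
  using x by simp_all

private lemma unit_facts [simp]:
  "L \<in> ce B" "dom2 B L = II" "cod2 B L = I" "R \<in> ce B" "dom2 B R = II" "cod2 B R = I"
  by simp_all

lemma lun_idm_pentagon:
  "vcmp B (hcmp B i (vcmp B (lun B II) a)) (vcmp B (asc B I II I) (hcmp B a i)) =
   vcmp B (hcmp B i (hcmp B L i)) (vcmp B (asc B I II I) (hcmp B a i))"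
proof -
  have ii: "hcmp B i i = idc B II" by (rule hcmp_idc) simp_all
  have "vcmp B (hcmp B i (vcmp B (lun B II) a)) (vcmp B (asc B I II I) (hcmp B a i))
      = vcmp B (vcmp B (hcmp B i (lun B II)) (hcmp B i a)) (vcmp B (asc B I II I) (hcmp B a i))"
    by (subst whisker_left_vcmp) simp_all
  also have "\<dots> = vcmp B (hcmp B i (lun B II)) (vcmp B (hcmp B i a) (vcmp B (asc B I II I) (hcmp B a i)))"
    by (rule vcmp_assoc[symmetric]) simp_all
  also have "\<dots> = vcmp B (hcmp B i (lun B II)) (vcmp B (asc B I I II) (asc B II I I))"
    using pentagon[of I I I I] by simp
  also have "\<dots> = vcmp B (vcmp B (hcmp B i (lun B II)) (asc B I I II)) (asc B II I I)"
    by (rule vcmp_assoc) simp_all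
  also have "\<dots> = vcmp B (hcmp B R (hcmp B i i)) (asc B II I I)"
    using triangle[of II I] ii by simp
  also have "\<dots> = vcmp B a (hcmp B (hcmp B R i) i)"
    using asc_natural[of i i R] by simp
  also have "\<dots> = vcmp B a (hcmp B (vcmp B (hcmp B i L) a) i)"
    using triangle[of I I] by simp
  also have "\<dots> = vcmp B a (vcmp B (hcmp B (hcmp B i L) i) (hcmp B a i))"
    by (subst whisker_right_vcmp) simp_all
  also have "\<dots> = vcmp B (vcmp B a (hcmp B (hcmp B i L) i)) (hcmp B a i)"
    by (rule vcmp_assoc) simp_all
  also have "\<dots> = vcmp B (vcmp B (hcmp B i (hcmp B L i)) (asc B I II I)) (hcmp B a i)"
    using asc_natural[of i L i] by simp
  also have "\<dots> = vcmp B (hcmp B i (hcmp B L i)) (vcmp B (asc B I II I) (hcmp B a i))"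
    by (rule vcmp_assoc[symmetric]) simp_all
  finally show ?thesis .
qed

lemma lun_cmp_idm_asc: "vcmp B (lun B II) a = hcmp B L i"
proof -
  have "iso2 B (hcmp B a i)" by (rule iso2_hcmp) (simp_all add: iso2_asc iso2_idc)
  then have "iso2 B (vcmp B (asc B I II I) (hcmp B a i))"
    by (intro iso2_vcmp) (simp_all add: iso2_asc)
  then have "hcmp B i (vcmp B (lun B II) a) = hcmp B i (hcmp B L i)"
    by (rule iso2_cancel_right[OF _ _ _ _ _ lun_idm_pentagon]) simp_all
  then show ?thesis by (rule whisker_idm_left_inj[where y = x, rotated -1]) simp_all
qed

lemma lun_idm_eq_run_idm: "L = R"
proof -
  have "vcmp B L (lun B II) = vcmp B L (hcmp B i L)"
    using lun_natural[of L] by simp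
  then have lun_II: "lun B II = hcmp B i L"
    by (rule iso2_cancel_left[OF iso2_lun, rotated -1]) simp_all
  have "hcmp B R i = hcmp B L i"
    using triangle[of I I] lun_cmp_idm_asc lun_II by simp
  then have "vcmp B L (run B II) = vcmp B R (run B II)"
    using run_natural[of L] run_natural[of R] by simp
  then show ?thesis
    by (rule iso2_cancel_right[OF iso2_run, rotated -1]) simp_all
qed

end

end

locale lax_functor_between =
  fixes E :: "('o,'a,'c) bicat" and B :: "('p,'q,'r) bicat"
    and P :: "('o,'a,'c,'p,'q,'r) laxf"
  assumes lax: "lax_functor E B P"
begin

sublocale E: bicategory E
  using lax unfolding lax_functor_def by unfold_locales blast

sublocale B: bicategory B
  using lax unfolding lax_functor_def by unfold_locales blast

lemma fo_ob [rule_format, simp]: "\<forall>x\<in>ob E. fo P x \<in> ob B"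
  using lax unfolding lax_functor_def by (elim conjE) assumption

lemma f1_typing [rule_format, simp]:
  "\<forall>f\<in>ar E. f1 P f \<in> ar B \<and> bsrc B (f1 P f) = fo P (bsrc E f) \<and> btrg B (f1 P f) = fo P (btrg E f)"
  using lax unfolding lax_functor_def by (elim conjE) assumption

lemma f2_typing [rule_format, simp]:
  "\<forall>\<alpha>\<in>ce E. f2 P \<alpha> \<in> ce B \<and> dom2 B (f2 P \<alpha>) = f1 P (dom2 E \<alpha>) \<and> cod2 B (f2 P \<alpha>) = f1 P (cod2 E \<alpha>)"
  using lax unfolding lax_functor_def by (elim conjE) assumption

lemma f2_idc [rule_format]: "\<forall>f\<in>ar E. f2 P (idc E f) = idc B (f1 P f)"
  using lax unfolding lax_functor_def by (elim conjE) assumption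

lemma f2_vcmp [rule_format]:
  "\<forall>\<alpha>\<in>ce E. \<forall>\<beta>\<in>ce E. dom2 E \<beta> = cod2 E \<alpha> \<longrightarrow> f2 P (vcmp E \<beta> \<alpha>) = vcmp B (f2 P \<beta>) (f2 P \<alpha>)"
  using lax unfolding lax_functor_def by (elim conjE) assumption

lemma phi_typing [rule_format, simp]:
  "\<forall>f\<in>ar E. \<forall>g\<in>ar E. bsrc E g = btrg E f \<longrightarrow>
     phi P g f \<in> ce B \<and> dom2 B (phi P g f) = cmp B (f1 P g) (f1 P f) \<and>
     cod2 B (phi P g f) = f1 P (cmp E g f)"
  using lax unfolding lax_functor_def by (elim conjE) assumption

lemma phi_natural [rule_format]:
  "\<forall>\<alpha>\<in>ce E. \<forall>\<beta>\<in>ce E. bsrc E (dom2 E \<beta>) = btrg E (dom2 E \<alpha>) \<longrightarrow>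
     vcmp B (f2 P (hcmp E \<beta> \<alpha>)) (phi P (dom2 E \<beta>) (dom2 E \<alpha>)) =
     vcmp B (phi P (cod2 E \<beta>) (cod2 E \<alpha>)) (hcmp B (f2 P \<beta>) (f2 P \<alpha>))"
  using lax unfolding lax_functor_def by (elim conjE) assumption

lemma phi0_typing [rule_format, simp]:
  "\<forall>x\<in>ob E. phi0 P x \<in> ce B \<and> dom2 B (phi0 P x) = idm B (fo P x) \<and> cod2 B (phi0 P x) = f1 P (idm E x)"
  using lax unfolding lax_functor_def by (elim conjE) assumption

lemma lax_asc [rule_format]:
  "\<forall>f\<in>ar E. \<forall>g\<in>ar E. \<forall>h\<in>ar E. bsrc E g = btrg E f \<longrightarrow> bsrc E h = btrg E g \<longrightarrow>
     vcmp B (f2 P (asc E h g f))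
       (vcmp B (phi P (cmp E h g) f) (hcmp B (phi P h g) (idc B (f1 P f)))) =
     vcmp B (phi P h (cmp E g f))
       (vcmp B (hcmp B (idc B (f1 P h)) (phi P g f)) (asc B (f1 P h) (f1 P g) (f1 P f)))"
  using lax unfolding lax_functor_def by (elim conjE) assumption

lemma lax_lun [rule_format]:
  "\<forall>f\<in>ar E. vcmp B (f2 P (lun E f))
       (vcmp B (phi P (idm E (btrg E f)) f) (hcmp B (phi0 P (btrg E f)) (idc B (f1 P f)))) =
     lun B (f1 P f)"
  using lax unfolding lax_functor_def by (elim conjE) assumption

lemma lax_run [rule_format]:
  "\<forall>f\<in>ar E. vcmp B (f2 P (run E f))
       (vcmp B (phi P f (idm E (bsrc E f))) (hcmp B (idc B (f1 P f)) (phi0 P (bsrc E f)))) =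
     run B (f1 P f)"
  using lax unfolding lax_functor_def by (elim conjE) assumption

lemma iso2_f2:
  assumes "iso2 E \<theta>"
  shows "iso2 B (f2 P \<theta>)"
proof -
  let ?j = "inv2 E \<theta>"
  have \<theta>: "\<theta> \<in> ce E" using assms by simp
  have "vcmp B (f2 P ?j) (f2 P \<theta>) = idc B (dom2 B (f2 P \<theta>))"
    using assms \<theta> f2_vcmp[of \<theta> ?j] f2_idc[of "dom2 E \<theta>"] by simp
  moreover have "vcmp B (f2 P \<theta>) (f2 P ?j) = idc B (cod2 B (f2 P \<theta>))"
    using assms \<theta> f2_vcmp[of ?j \<theta>] f2_idc[of "cod2 E \<theta>"] by simp
  moreover have "f2 P ?j \<in> ce B" "dom2 B (f2 P ?j) = cod2 B (f2 P \<theta>)"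
    "cod2 B (f2 P ?j) = dom2 B (f2 P \<theta>)" "f2 P \<theta> \<in> ce B"
    using assms \<theta> by simp_all
  ultimately show ?thesis unfolding iso2_def by blast
qed

lemma f2_inv2:
  assumes "iso2 E \<theta>"
  shows "f2 P (inv2 E \<theta>) = inv2 B (f2 P \<theta>)"
proof -
  have \<theta>: "\<theta> \<in> ce E" using assms by simp
  have iso: "iso2 B (f2 P \<theta>)" using assms by (rule iso2_f2)
  have left: "vcmp B (f2 P (inv2 E \<theta>)) (f2 P \<theta>) = idc B (dom2 B (f2 P \<theta>))"
    using assms \<theta> f2_vcmp[of \<theta> "inv2 E \<theta>"] f2_idc[of "dom2 E \<theta>"] by simp
  show ?thesis
    by (rule B.inverse_unique[of "f2 P \<theta>"]) (use assms \<theta> iso left in simp_all)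
qed

lemma f2_inv2_vcmp:
  assumes "iso2 E \<gamma>" "\<phi> \<in> ce B" "cod2 B \<phi> = dom2 B (f2 P \<gamma>)" and eq: "vcmp B (f2 P \<gamma>) \<phi> = \<mu>"
  shows "vcmp B (f2 P (inv2 E \<gamma>)) \<mu> = \<phi>"
proof -
  have iso: "iso2 B (f2 P \<gamma>)" using assms(1) by (rule iso2_f2)
  have "vcmp B (f2 P (inv2 E \<gamma>)) \<mu> = vcmp B (inv2 B (f2 P \<gamma>)) (vcmp B (f2 P \<gamma>) \<phi>)"
    unfolding eq f2_inv2[OF assms(1)] ..
  also have "\<dots> = vcmp B (vcmp B (inv2 B (f2 P \<gamma>)) (f2 P \<gamma>)) \<phi>"
    using iso assms by (intro B.vcmp_assoc) simp_all
  also have "\<dots> = \<phi>" using iso assms by simp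
  finally show ?thesis .
qed


lemma cartesian_exists_lift:
  assumes "cartesian E B P f" "g \<in> ar E" "h \<in> ar B" "btrg E g = btrg E f"
    and "bsrc B h = fo P (bsrc E g)" "btrg B h = fo P (bsrc E f)"
    and "iso2 B \<alpha>" "dom2 B \<alpha> = cmp B (f1 P f) h" "cod2 B \<alpha> = f1 P g"
  shows "\<exists>ht at bt. is_lift E B P f g h \<alpha> ht at bt"
  using assms unfolding cartesian_def by blast

lemma lift_reindex:
  assumes lift: "is_lift E B P f g h \<alpha> ht at bt"
    and f: "f \<in> ar E" and \<alpha>: "\<alpha> \<in> ce B" "dom2 B \<alpha> = cmp B (f1 P f) h"
    and \<theta>: "\<theta> \<in> ce E" "cod2 E \<theta> = ht" "f2 P \<theta> = inv2 B bt"
  shows "vcmp B (f2 P (vcmp E at (hcmp E (idc E f) \<theta>))) (phi P f (dom2 E \<theta>)) = \<alpha>"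
proof -
  from lift have ht: "ht \<in> ar E" "btrg E ht = bsrc E f"
    and at: "iso2 E at" "dom2 E at = cmp E f ht"
    and bt: "iso2 B bt" "dom2 B bt = f1 P ht" "cod2 B bt = h"
    and lift_eq: "vcmp B \<alpha> (hcmp B (idc B (f1 P f)) bt) = vcmp B (f2 P at) (phi P f ht)"
    unfolding is_lift_def by auto
  let ?c = "dom2 E \<theta>" and ?i = "idc B (f1 P f)"
  have src: "bsrc E ht = bsrc E ?c" "btrg E ?c = bsrc E f"
    using \<theta> ht E.ce_typing[of \<theta>] by auto
  have h: "h \<in> ar B" "btrg B h = bsrc B (f1 P f)"
    using bt ht f B.ce_typing[of bt] by auto
  note ty = f \<alpha> \<theta> ht at bt src h
  have "vcmp B (f2 P (hcmp E (idc E f) \<theta>)) (phi P f ?c) = vcmp B (phi P f ht) (hcmp B ?i (inv2 B bt))"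
    using phi_natural[of \<theta> "idc E f"] f2_idc[of f] ty by simp
  then have "vcmp B (f2 P (vcmp E at (hcmp E (idc E f) \<theta>))) (phi P f ?c)
      = vcmp B (f2 P at) (vcmp B (phi P f ht) (hcmp B ?i (inv2 B bt)))"
    using f2_vcmp[of "hcmp E (idc E f) \<theta>" at] ty by (simp add: B.vcmp_assoc[symmetric])
  also have "\<dots> = vcmp B (vcmp B (f2 P at) (phi P f ht)) (hcmp B ?i (inv2 B bt))"
    using ty by (intro B.vcmp_assoc) simp_all
  also have "\<dots> = vcmp B \<alpha> (vcmp B (hcmp B ?i bt) (hcmp B ?i (inv2 B bt)))"
    unfolding lift_eq[symmetric] using ty by (intro B.vcmp_assoc[symmetric]) simp_all
  also have "\<dots> = vcmp B \<alpha> (hcmp B ?i (idc B h))"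
    using ty B.whisker_left_vcmp[of "f1 P f" bt "inv2 B bt"] by simp
  also have "\<dots> = \<alpha>"
    using ty B.hcmp_idc[of h "f1 P f"] by simp
  finally show ?thesis .
qed

end

locale locally_fibered = lax_functor_between +
  assumes local_fibration: "locally_fibered_in_groupoids E B P"
begin

lemma lift2_unique [rule_format]:
  "\<forall>\<theta>\<in>ce E. \<forall>\<psi>\<in>ce E. \<forall>\<chi>\<in>ce B.
     cod2 E \<psi> = cod2 E \<theta> \<longrightarrow>
     dom2 B \<chi> = f1 P (dom2 E \<psi>) \<longrightarrow> cod2 B \<chi> = f1 P (dom2 E \<theta>) \<longrightarrow>
     vcmp B (f2 P \<theta>) \<chi> = f2 P \<psi> \<longrightarrow>
     (\<exists>!\<xi>. \<xi> \<in> ce E \<and> dom2 E \<xi> = dom2 E \<psi> \<and> cod2 E \<xi> = dom2 E \<theta> \<and>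
          vcmp E \<theta> \<xi> = \<psi> \<and> f2 P \<xi> = \<chi>)"
  using local_fibration unfolding locally_fibered_in_groupoids_def by (elim conjE) assumption

lemma lift2_exists [rule_format]:
  "\<forall>u\<in>ar E. \<forall>\<kappa>\<in>ce B. cod2 B \<kappa> = f1 P u \<longrightarrow> (\<exists>\<theta>\<in>ce E. cod2 E \<theta> = u \<and> f2 P \<theta> = \<kappa>)"
  using local_fibration unfolding locally_fibered_in_groupoids_def by (elim conjE) assumption

lemma iso2_reflect:
  assumes \<theta>: "\<theta> \<in> ce E" and iso: "iso2 B (f2 P \<theta>)"
  shows "iso2 E \<theta>"
proof -
  let ?c = "cod2 E \<theta>" and ?d = "dom2 E \<theta>"
  have "\<exists>!\<xi>. \<xi> \<in> ce E \<and> dom2 E \<xi> = dom2 E (idc E ?c) \<and> cod2 E \<xi> = ?d \<and>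
      vcmp E \<theta> \<xi> = idc E ?c \<and> f2 P \<xi> = inv2 B (f2 P \<theta>)"
    using \<theta> iso f2_idc[of ?c] by (intro lift2_unique) simp_all
  then obtain \<xi> where \<xi>: "\<xi> \<in> ce E" "dom2 E \<xi> = ?c" "cod2 E \<xi> = ?d" "vcmp E \<theta> \<xi> = idc E ?c"
      "f2 P \<xi> = inv2 B (f2 P \<theta>)"
    using \<theta> by auto
  \<comment> \<open>both the identity and \<open>\<xi> \<theta>\<close> are lifts of the identity of \<open>P ?d\<close> through \<open>\<theta>\<close>\<close>
  have unique: "\<exists>!\<zeta>. \<zeta> \<in> ce E \<and> dom2 E \<zeta> = ?d \<and> cod2 E \<zeta> = ?d \<and>
      vcmp E \<theta> \<zeta> = \<theta> \<and> f2 P \<zeta> = idc B (f1 P ?d)"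
    using \<theta> by (intro lift2_unique) simp_all
  have "vcmp E \<theta> (vcmp E \<xi> \<theta>) = vcmp E (vcmp E \<theta> \<xi>) \<theta>"
    using \<theta> \<xi> by (intro E.vcmp_assoc) simp_all
  then have "vcmp E \<theta> (vcmp E \<xi> \<theta>) = \<theta>" using \<theta> \<xi> by simp
  moreover have "f2 P (vcmp E \<xi> \<theta>) = idc B (f1 P ?d)"
    using f2_vcmp[of \<theta> \<xi>] \<theta> \<xi> iso by simp
  ultimately have "vcmp E \<xi> \<theta> \<in> ce E \<and> dom2 E (vcmp E \<xi> \<theta>) = ?d \<and> cod2 E (vcmp E \<xi> \<theta>) = ?d \<and>
      vcmp E \<theta> (vcmp E \<xi> \<theta>) = \<theta> \<and> f2 P (vcmp E \<xi> \<theta>) = idc B (f1 P ?d)"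
    using \<theta> \<xi> by simp
  moreover have "idc E ?d \<in> ce E \<and> dom2 E (idc E ?d) = ?d \<and> cod2 E (idc E ?d) = ?d \<and>
      vcmp E \<theta> (idc E ?d) = \<theta> \<and> f2 P (idc E ?d) = idc B (f1 P ?d)"
    using \<theta> f2_idc[of ?d] by simp
  ultimately have "vcmp E \<xi> \<theta> = idc E ?d" using unique by blast
  then show ?thesis unfolding iso2_def using \<theta> \<xi> by blast
qed

lemma lift_iso2:
  assumes "u \<in> ar E" "iso2 B \<kappa>" "cod2 B \<kappa> = f1 P u"
  shows "\<exists>\<theta>. iso2 E \<theta> \<and> cod2 E \<theta> = u \<and> f2 P \<theta> = \<kappa>"
  using assms lift2_exists[of u \<kappa>] iso2_reflect by auto

lemma exists_cell_over_idc:
  assumes A: "A \<in> ce E" and C: "C \<in> ce E" "dom2 E C = dom2 E A"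
    and \<Phi>: "\<Phi> \<in> ce B" "cod2 B \<Phi> = f1 P (dom2 E A)"
    and M: "iso2 B M" "vcmp B (f2 P A) \<Phi> = M" "vcmp B (f2 P C) \<Phi> = M"
  shows "\<exists>\<epsilon>. \<epsilon> \<in> ce E \<and> dom2 E \<epsilon> = cod2 E A \<and> cod2 E \<epsilon> = cod2 E C \<and> f2 P \<epsilon> = idc B (cod2 B M)"
proof -
  \<comment> \<open>\<open>\<epsilon>\<close> is \<open>C\<close> composed with a lift of \<open>\<Phi> M\<inverse>\<close>, which is a section of \<open>A\<close>\<close>
  define \<chi> where "\<chi> = vcmp B \<Phi> (inv2 B M)"
  have dom_M: "dom2 B M = dom2 B \<Phi>" and cod_M: "cod2 B M = f1 P (cod2 E A)"
    unfolding M(2)[symmetric] using A \<Phi> by simp_all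
  have \<chi>: "\<chi> \<in> ce B" "dom2 B \<chi> = cod2 B M" "cod2 B \<chi> = f1 P (dom2 E A)"
    unfolding \<chi>_def using \<Phi> M(1) dom_M by simp_all
  have right_inverse: "vcmp B X \<chi> = idc B (cod2 B M)"
    if "X \<in> ce B" "dom2 B X = cod2 B \<Phi>" "vcmp B X \<Phi> = M" for X
  proof -
    have "vcmp B X \<chi> = vcmp B (vcmp B X \<Phi>) (inv2 B M)"
      unfolding \<chi>_def using that \<Phi> M(1) dom_M by (intro B.vcmp_assoc) simp_all
    then show ?thesis using that M(1) by simp
  qed
  have "\<exists>!\<xi>. \<xi> \<in> ce E \<and> dom2 E \<xi> = dom2 E (idc E (cod2 E A)) \<and> cod2 E \<xi> = dom2 E A \<and>
      vcmp E A \<xi> = idc E (cod2 E A) \<and> f2 P \<xi> = \<chi>"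
    using A \<chi> \<Phi> right_inverse[of "f2 P A"] M(2) cod_M f2_idc[of "cod2 E A"] by (intro lift2_unique) simp_all
  then obtain \<xi> where \<xi>: "\<xi> \<in> ce E" "dom2 E \<xi> = cod2 E A" "cod2 E \<xi> = dom2 E A" "f2 P \<xi> = \<chi>"
    using A by auto
  have "f2 P (vcmp E C \<xi>) = idc B (cod2 B M)"
    using f2_vcmp[of \<xi> C] right_inverse[of "f2 P C"] \<xi> C \<Phi> M(3) by simp
  then show ?thesis using \<xi> C by (intro exI[of _ "vcmp E C \<xi>"]) simp
qed

end

locale fibration_fiber =
  fixes E :: "('o,'a,'c) bicat" and B :: "('p,'q,'r) bicat"
    and P :: "('o,'a,'c,'p,'q,'r) laxf" and cl :: "'a \<Rightarrow> 'r \<Rightarrow> 'c" and b :: 'p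
  assumes fibered: "fibered_in_pseudogroupoids E B P"
    and cleavage: "local_cleavage E B P cl"
    and b: "b \<in> ob B"

sublocale fibration_fiber \<subseteq> locally_fibered
  using fibered unfolding fibered_in_pseudogroupoids_def
  by unfold_locales blast+

context fibration_fiber
begin

lemma cartesian_ar: "f \<in> ar E \<Longrightarrow> cartesian E B P f"
  using fibered unfolding fibered_in_pseudogroupoids_def by blast

lemma cleavage_lift:
  "u \<in> ar E \<Longrightarrow> \<kappa> \<in> ce B \<Longrightarrow> cod2 B \<kappa> = f1 P u \<Longrightarrow>
    cl u \<kappa> \<in> ce E \<and> cod2 E (cl u \<kappa>) = u \<and> f2 P (cl u \<kappa>) = \<kappa>"
  using cleavage unfolding local_cleavage_def by blast

abbreviation "I \<equiv> idm B b"
abbreviation "L \<equiv> lun B I"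

lemma I_typing [simp]: "I \<in> ar B" "bsrc B I = b" "btrg B I = b"
  using b by simp_all

lemma L_typing [simp]: "L \<in> ce B" "dom2 B L = cmp B I I" "cod2 B L = I" "iso2 B L"
  using B.iso2_lun[of I] by simp_all

lemma fib_arD:
  assumes "h \<in> fib_ar E B P b"
  shows "h \<in> ar E" "f1 P h = I" "fo P (bsrc E h) = b" "fo P (btrg E h) = b"
  using assms f1_typing[of h] unfolding fib_ar_def by auto

lemma fib_iso_fib_ce:
  assumes "\<alpha> \<in> fib_ce E B P b"
  shows "fib_iso E B P b \<alpha>"
proof -
  have \<alpha>: "\<alpha> \<in> ce E" "f2 P \<alpha> = idc B I" using assms unfolding fib_ce_def by auto
  have iso: "iso2 E \<alpha>" using \<alpha> B.iso2_idc[of I] by (intro iso2_reflect) simp_all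
  have "f2 P (inv2 E \<alpha>) = idc B I" using f2_inv2[OF iso] \<alpha> B.inv2_idc[of I] by simp
  then have "inv2 E \<alpha> \<in> fib_ce E B P b" unfolding fib_ce_def using iso by simp
  then show ?thesis
    unfolding fib_iso_def using assms iso by (intro conjI bexI[of _ "inv2 E \<alpha>"]) simp_all
qed

definition fib_unit :: "'o \<Rightarrow> 'c" where
  "fib_unit z = cl (idm E z) (phi0 P z)"

lemma fib_unit:
  assumes "z \<in> ob E" "fo P z = b"
  shows "fib_unit z \<in> ce E" "cod2 E (fib_unit z) = idm E z" "f2 P (fib_unit z) = phi0 P z"
    "dom2 E (fib_unit z) = fib_id E B P cl z"
    and fib_id_typing: "fib_id E B P cl z \<in> ar E" "f1 P (fib_id E B P cl z) = I"
    "bsrc E (fib_id E B P cl z) = z" "btrg E (fib_id E B P cl z) = z"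
proof -
  have c: "fib_unit z \<in> ce E" "cod2 E (fib_unit z) = idm E z" "f2 P (fib_unit z) = phi0 P z"
    using cleavage_lift[of "idm E z" "phi0 P z"] assms unfolding fib_unit_def by simp_all
  then show "fib_unit z \<in> ce E" "cod2 E (fib_unit z) = idm E z" "f2 P (fib_unit z) = phi0 P z" .
  show d: "dom2 E (fib_unit z) = fib_id E B P cl z" unfolding fib_unit_def fib_id_def ..
  show "fib_id E B P cl z \<in> ar E" using c d[symmetric] by simp
  show "f1 P (fib_id E B P cl z) = I" using f2_typing[of "fib_unit z"] c d assms by simp
  show "bsrc E (fib_id E B P cl z) = z" "btrg E (fib_id E B P cl z) = z"
    using E.ce_typing[of "fib_unit z"] c d assms by simp_all
qed

lemma fib_iso_to_fib_id:
  assumes a: "a \<in> fib_ar E B P b" and c: "c \<in> fib_ar E B P b" and ac: "bsrc E a = btrg E c"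
    and z: "bsrc E c = z" "btrg E a = z"
    and \<psi>: "\<psi> \<in> ce E" "dom2 E \<psi> = fib_id E B P cl z" "cod2 E \<psi> = cmp E a c"
    and eq: "vcmp B (f2 P \<psi>) L = phi P a c"
  shows "\<exists>\<alpha>. fib_iso E B P b \<alpha> \<and> dom2 E \<alpha> = fib_cmp E B P cl b a c \<and> cod2 E \<alpha> = fib_id E B P cl z"
proof -
  \<comment> \<open>\<open>\<psi>\<close> and the chosen lift defining \<open>fib_cmp\<close> lie over the same 2-cell,
    so they differ by a 2-cell over the identity\<close>
  note fa = fib_arD[OF a] and fc = fib_arD[OF c]
  have zo: "z \<in> ob E" "fo P z = b" using z fc by auto
  note u = fib_unit[OF zo]
  define \<kappa> where "\<kappa> = vcmp B (phi P a c) (inv2 B L)"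
  have \<kappa>: "\<kappa> \<in> ce B" "dom2 B \<kappa> = I" "cod2 B \<kappa> = f1 P (cmp E a c)"
    unfolding \<kappa>_def using fa fc ac by simp_all
  define \<Lambda> where "\<Lambda> = cl (cmp E a c) \<kappa>"
  have \<Lambda>: "\<Lambda> \<in> ce E" "cod2 E \<Lambda> = cmp E a c" "f2 P \<Lambda> = \<kappa>"
    unfolding \<Lambda>_def using cleavage_lift[of "cmp E a c" \<kappa>] \<kappa> fa fc ac by simp_all
  have dom_\<Lambda>: "dom2 E \<Lambda> = fib_cmp E B P cl b a c" unfolding \<Lambda>_def \<kappa>_def fib_cmp_def ..
  have f1_\<Lambda>: "f1 P (dom2 E \<Lambda>) = I" using \<Lambda> \<kappa> f2_typing[of \<Lambda>] by simp
  have "f2 P \<psi> = vcmp B (f2 P \<psi>) (vcmp B L (inv2 B L))" using \<psi> u by simp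
  also have "\<dots> = \<kappa>"
    unfolding \<kappa>_def eq[symmetric] using \<psi> u fa fc by (intro B.vcmp_assoc) simp_all
  finally have f2_\<psi>: "f2 P \<psi> = \<kappa>" .
  have "\<exists>!\<xi>. \<xi> \<in> ce E \<and> dom2 E \<xi> = dom2 E \<psi> \<and> cod2 E \<xi> = dom2 E \<Lambda> \<and>
      vcmp E \<Lambda> \<xi> = \<psi> \<and> f2 P \<xi> = idc B I"
    using \<Lambda> \<psi> u f1_\<Lambda> \<kappa> f2_\<psi> by (intro lift2_unique) simp_all
  then obtain \<xi> where \<xi>: "\<xi> \<in> ce E" "dom2 E \<xi> = fib_id E B P cl z" "cod2 E \<xi> = fib_cmp E B P cl b a c"
      "f2 P \<xi> = idc B I"
    using \<psi> dom_\<Lambda> by auto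
  then have "fib_iso E B P b \<xi>" by (intro fib_iso_fib_ce) (simp add: fib_ce_def)
  then obtain \<beta> where \<beta>: "\<beta> \<in> fib_ce E B P b" "dom2 E \<beta> = cod2 E \<xi>" "cod2 E \<beta> = dom2 E \<xi>"
    unfolding fib_iso_def by blast
  then show ?thesis using \<xi> fib_iso_fib_ce[OF \<beta>(1)] by auto
qed

lemma exists_right_pseudo_inverse:
  assumes a: "a \<in> fib_ar E B P b"
  shows "\<exists>c. c \<in> fib_ar E B P b \<and> bsrc E c = btrg E a \<and> btrg E c = bsrc E a \<and>
    (\<exists>\<gamma>. iso2 E \<gamma> \<and> dom2 E \<gamma> = cmp E a c \<and> cod2 E \<gamma> = fib_id E B P cl (btrg E a) \<and>
      vcmp B (f2 P \<gamma>) (phi P a c) = L)"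
proof -
  note fa = fib_arD[OF a]
  define y where "y = btrg E a"
  have y: "y \<in> ob E" "fo P y = b" using fa by (simp_all add: y_def)
  define V where "V = fib_id E B P cl y"
  have V: "V \<in> ar E" "f1 P V = I" "bsrc E V = y" "btrg E V = y"
    using fib_id_typing[OF y] by (simp_all add: V_def)
  \<comment> \<open>lift \<open>L : P a \<circ> I \<Rightarrow> P V\<close> along the cartesian 1-cell \<open>a\<close>\<close>
  obtain ht at bt where lift: "is_lift E B P a V I L ht at bt"
    using cartesian_exists_lift[OF cartesian_ar[OF fa(1)], of V I L] V fa y unfolding y_def by auto
  then have ht: "ht \<in> ar E" "bsrc E ht = y" "btrg E ht = bsrc E a"
    and at: "iso2 E at" "dom2 E at = cmp E a ht" "cod2 E at = V"
    and bt: "iso2 B bt" "dom2 B bt = f1 P ht" "cod2 B bt = I"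
    using V unfolding is_lift_def by auto
  \<comment> \<open>replace \<open>ht\<close>, which lies over \<open>I\<close> only up to \<open>bt\<close>, by an isomorphic 1-cell \<open>c\<close> lying over \<open>I\<close>\<close>
  obtain \<theta> where \<theta>: "iso2 E \<theta>" "cod2 E \<theta> = ht" "f2 P \<theta> = inv2 B bt"
    using lift_iso2[of ht "inv2 B bt"] ht bt B.iso2_inv2 by auto
  define c where "c = dom2 E \<theta>"
  have c: "c \<in> ar E" "f1 P c = I" "bsrc E c = y" "btrg E c = bsrc E a"
    using \<theta> ht bt f2_typing[of \<theta>] E.ce_typing[of \<theta>] unfolding c_def by auto
  define \<gamma> where "\<gamma> = vcmp E at (hcmp E (idc E a) \<theta>)"
  have "iso2 E \<gamma>" unfolding \<gamma>_def
    using at \<theta> fa ht c E.iso2_idc[of a] unfolding c_def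
    by (intro E.iso2_vcmp E.iso2_hcmp) simp_all
  moreover have "dom2 E \<gamma> = cmp E a c" "cod2 E \<gamma> = V"
    unfolding \<gamma>_def using at \<theta> fa ht c unfolding c_def by simp_all
  moreover have "vcmp B (f2 P \<gamma>) (phi P a c) = L"
    unfolding \<gamma>_def c_def using lift fa \<theta> by (intro lift_reindex) simp_all
  moreover have "c \<in> fib_ar E B P b" unfolding fib_ar_def using c by simp
  ultimately show ?thesis using c unfolding V_def y_def by blast
qed


lemma left_unit_cell:
  assumes h: "h \<in> fib_ar E B P b" and g: "g \<in> fib_ar E B P b" and k: "k \<in> fib_ar E B P b"
    and objs: "bsrc E h = btrg E g" "bsrc E g = y" "btrg E k = y" "btrg E h = y"
    and \<gamma>: "\<gamma> \<in> ce E" "dom2 E \<gamma> = cmp E h g" "cod2 E \<gamma> = fib_id E B P cl y"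
    and eq: "vcmp B (f2 P \<gamma>) (phi P h g) = L"
  shows "\<exists>A. A \<in> ce E \<and> dom2 E A = cmp E (cmp E h g) k \<and> cod2 E A = k \<and>
    vcmp B (f2 P A) (vcmp B (phi P (cmp E h g) k) (hcmp B (phi P h g) (idc B I))) =
      vcmp B L (hcmp B L (idc B I))"
proof -
  note fh = fib_arD[OF h] and fg = fib_arD[OF g] and fk = fib_arD[OF k]
  have y: "y \<in> ob E" "fo P y = b" using fk objs E.ar_src_trg[of k] by auto
  note u = fib_unit[OF y] and V = fib_id_typing[OF y]
  let ?i = "idc B I" and ?V = "fib_id E B P cl y" and ?u = "fib_unit y"
  let ?Gk = "hcmp E \<gamma> (idc E k)" and ?Uk = "hcmp E ?u (idc E k)"
  let ?Q = "vcmp B (phi P (idm E y) k) (hcmp B (phi0 P y) ?i)"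
  note ty = fh fg fk objs \<gamma> u V y
  have nat_\<gamma>: "vcmp B (f2 P ?Gk) (phi P (cmp E h g) k) = vcmp B (phi P ?V k) (hcmp B (f2 P \<gamma>) ?i)"
    using phi_natural[of "idc E k" \<gamma>] f2_idc[of k] ty by simp
  have nat_u: "vcmp B (f2 P ?Uk) (phi P ?V k) = ?Q"
    using phi_natural[of "idc E k" ?u] f2_idc[of k] ty by simp
  have unit: "vcmp B (f2 P (lun E k)) ?Q = L"
    using lax_lun[of k] ty by simp
  have "f2 P (vcmp E (lun E k) (vcmp E ?Uk ?Gk)) = vcmp B (f2 P (lun E k)) (vcmp B (f2 P ?Uk) (f2 P ?Gk))"
    using f2_vcmp[of ?Gk ?Uk] f2_vcmp[of "vcmp E ?Uk ?Gk" "lun E k"] ty by simp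
  also have "vcmp B \<dots> (vcmp B (phi P (cmp E h g) k) (hcmp B (phi P h g) ?i))
      = vcmp B (f2 P (lun E k)) (vcmp B (f2 P ?Uk)
          (vcmp B (vcmp B (f2 P ?Gk) (phi P (cmp E h g) k)) (hcmp B (phi P h g) ?i)))"
    using ty by (simp add: B.vcmp_assoc)
  also have "\<dots> = vcmp B (f2 P (lun E k)) (vcmp B (f2 P ?Uk)
      (vcmp B (phi P ?V k) (vcmp B (hcmp B (f2 P \<gamma>) ?i) (hcmp B (phi P h g) ?i))))"
    unfolding nat_\<gamma> using ty by (subst B.vcmp_assoc) simp_all
  also have "\<dots> = vcmp B (f2 P (lun E k)) (vcmp B (f2 P ?Uk) (vcmp B (phi P ?V k) (hcmp B L ?i)))"
    using B.whisker_right_vcmp[of I "f2 P \<gamma>" "phi P h g"] eq ty by simp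
  also have "\<dots> = vcmp B (vcmp B (f2 P (lun E k)) (vcmp B (f2 P ?Uk) (phi P ?V k))) (hcmp B L ?i)"
    using ty by (simp add: B.vcmp_assoc)
  also have "\<dots> = vcmp B L (hcmp B L ?i)"
    unfolding nat_u unit ..
  finally show ?thesis
    using ty by (intro exI[of _ "vcmp E (lun E k) (vcmp E ?Uk ?Gk)"]) simp
qed

lemma right_unit_cell:
  assumes h: "h \<in> fib_ar E B P b" and g: "g \<in> fib_ar E B P b" and k: "k \<in> fib_ar E B P b"
    and objs: "bsrc E h = x" "bsrc E g = btrg E k" "btrg E g = x"
    and \<gamma>: "\<gamma> \<in> ce E" "dom2 E \<gamma> = cmp E g k" "cod2 E \<gamma> = fib_id E B P cl x"
    and eq: "vcmp B (f2 P \<gamma>) (phi P g k) = L"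
  shows "\<exists>C. C \<in> ce E \<and> dom2 E C = cmp E (cmp E h g) k \<and> cod2 E C = h \<and>
    vcmp B (f2 P C) (vcmp B (phi P (cmp E h g) k) (hcmp B (phi P h g) (idc B I))) =
      vcmp B L (hcmp B L (idc B I))"
proof -
  note fh = fib_arD[OF h] and fg = fib_arD[OF g] and fk = fib_arD[OF k]
  have x: "x \<in> ob E" "fo P x = b" using fh objs E.ar_src_trg[of h] by auto
  note u = fib_unit[OF x] and V = fib_id_typing[OF x]
  let ?i = "idc B I" and ?V = "fib_id E B P cl x" and ?u = "fib_unit x"
  let ?a = "asc E h g k" and ?hG = "hcmp E (idc E h) \<gamma>" and ?hU = "hcmp E (idc E h) ?u"
  let ?Q = "vcmp B (phi P h (idm E x)) (hcmp B ?i (phi0 P x))"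
  note ty = fh fg fk objs \<gamma> u V x
  have asc: "vcmp B (f2 P ?a) (vcmp B (phi P (cmp E h g) k) (hcmp B (phi P h g) ?i)) =
      vcmp B (phi P h (cmp E g k)) (vcmp B (hcmp B ?i (phi P g k)) (asc B I I I))"
    using lax_asc[of k g h] ty by simp
  have nat_\<gamma>: "vcmp B (f2 P ?hG) (phi P h (cmp E g k)) = vcmp B (phi P h ?V) (hcmp B ?i (f2 P \<gamma>))"
    using phi_natural[of \<gamma> "idc E h"] f2_idc[of h] ty by simp
  have nat_u: "vcmp B (f2 P ?hU) (phi P h ?V) = ?Q"
    using phi_natural[of ?u "idc E h"] f2_idc[of h] ty by simp
  \<comment> \<open>the right unitor of \<open>h\<close> lies over \<open>run B I\<close>, which coincides with \<open>L\<close>\<close>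
  have unit: "vcmp B (f2 P (run E h)) ?Q = L"
    using lax_run[of h] B.lun_idm_eq_run_idm[OF b] ty by simp
  have triangle: "vcmp B (hcmp B ?i L) (asc B I I I) = hcmp B L ?i"
    using B.triangle[of I I] B.lun_idm_eq_run_idm[OF b] by simp
  have "f2 P (vcmp E (run E h) (vcmp E ?hU (vcmp E ?hG ?a))) =
      vcmp B (f2 P (run E h)) (vcmp B (f2 P ?hU) (vcmp B (f2 P ?hG) (f2 P ?a)))"
    using f2_vcmp[of ?a ?hG] f2_vcmp[of "vcmp E ?hG ?a" ?hU]
      f2_vcmp[of "vcmp E ?hU (vcmp E ?hG ?a)" "run E h"] ty by simp
  also have "vcmp B \<dots> (vcmp B (phi P (cmp E h g) k) (hcmp B (phi P h g) ?i))
      = vcmp B (f2 P (run E h)) (vcmp B (f2 P ?hU) (vcmp B (f2 P ?hG)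
          (vcmp B (f2 P ?a) (vcmp B (phi P (cmp E h g) k) (hcmp B (phi P h g) ?i)))))"
    using ty by (simp add: B.vcmp_assoc)
  also have "\<dots> = vcmp B (f2 P (run E h)) (vcmp B (f2 P ?hU)
      (vcmp B (vcmp B (f2 P ?hG) (phi P h (cmp E g k))) (vcmp B (hcmp B ?i (phi P g k)) (asc B I I I))))"
    unfolding asc using ty by (simp add: B.vcmp_assoc)
  also have "\<dots> = vcmp B (f2 P (run E h)) (vcmp B (f2 P ?hU) (vcmp B (phi P h ?V)
      (vcmp B (vcmp B (hcmp B ?i (f2 P \<gamma>)) (hcmp B ?i (phi P g k))) (asc B I I I))))"
    unfolding nat_\<gamma> using ty by (simp add: B.vcmp_assoc)
  also have "\<dots> = vcmp B (f2 P (run E h)) (vcmp B (f2 P ?hU) (vcmp B (phi P h ?V) (hcmp B L ?i)))"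
    using B.whisker_left_vcmp[of I "f2 P \<gamma>" "phi P g k"] eq triangle ty by simp
  also have "\<dots> = vcmp B (vcmp B (f2 P (run E h)) (vcmp B (f2 P ?hU) (phi P h ?V))) (hcmp B L ?i)"
    using ty by (simp add: B.vcmp_assoc)
  also have "\<dots> = vcmp B L (hcmp B L ?i)"
    unfolding nat_u unit ..
  finally show ?thesis
    using ty by (intro exI[of _ "vcmp E (run E h) (vcmp E ?hU (vcmp E ?hG ?a))"]) simp
qed

lemma right_pseudo_inverse_is_left:
  assumes h: "h \<in> fib_ar E B P b" and g: "g \<in> fib_ar E B P b" and k: "k \<in> fib_ar E B P b"
    and objs: "bsrc E h = x" "btrg E h = y" "bsrc E g = y" "btrg E g = x" "bsrc E k = x" "btrg E k = y"
    and \<gamma>: "\<gamma> \<in> ce E" "dom2 E \<gamma> = cmp E h g" "cod2 E \<gamma> = fib_id E B P cl y"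
      "vcmp B (f2 P \<gamma>) (phi P h g) = L"
    and \<gamma>': "iso2 E \<gamma>'" "dom2 E \<gamma>' = cmp E g k" "cod2 E \<gamma>' = fib_id E B P cl x"
      "vcmp B (f2 P \<gamma>') (phi P g k) = L"
  shows "\<exists>\<psi>. \<psi> \<in> ce E \<and> dom2 E \<psi> = fib_id E B P cl x \<and> cod2 E \<psi> = cmp E g h \<and>
    vcmp B (f2 P \<psi>) L = phi P g h"
proof -
  \<comment> \<open>\<open>h \<cong> (h g) k \<cong> k\<close> over the identity, hence \<open>g h \<cong> g k \<cong> 1\<close>\<close>
  note fh = fib_arD[OF h] and fg = fib_arD[OF g] and fk = fib_arD[OF k]
  have xy: "x \<in> ob E" "fo P x = b" "y \<in> ob E" "fo P y = b"
    using fh objs E.ar_src_trg[of h] by auto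
  note V = fib_id_typing[OF xy(1,2)]
  let ?i = "idc B I" and ?M = "vcmp B L (hcmp B L (idc B I))"
  let ?\<Phi> = "vcmp B (phi P (cmp E h g) k) (hcmp B (phi P h g) ?i)"
  obtain A where A: "A \<in> ce E" "dom2 E A = cmp E (cmp E h g) k" "cod2 E A = k"
      "vcmp B (f2 P A) ?\<Phi> = ?M"
    using left_unit_cell[OF h g k _ _ _ _ \<gamma>] objs by auto
  obtain C where C: "C \<in> ce E" "dom2 E C = cmp E (cmp E h g) k" "cod2 E C = h"
      "vcmp B (f2 P C) ?\<Phi> = ?M"
    using right_unit_cell[OF h g k _ _ _ _ _ _ \<gamma>'(4)] \<gamma>' objs by auto
  have "iso2 B ?M"
    using B.iso2_lun[of I] B.iso2_idc[of I] by (intro B.iso2_vcmp B.iso2_hcmp) simp_all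
  then obtain \<epsilon> where \<epsilon>: "\<epsilon> \<in> ce E" "dom2 E \<epsilon> = k" "cod2 E \<epsilon> = h" "f2 P \<epsilon> = ?i"
    using exists_cell_over_idc[OF A(1) C(1) _ _ _ _ A(4) C(4)] A C fh fg fk objs by auto
  define \<psi> where "\<psi> = vcmp E (hcmp E (idc E g) \<epsilon>) (inv2 E \<gamma>')"
  note ty = fh fg fk objs \<epsilon> \<gamma>' V
  have "vcmp B (f2 P (hcmp E (idc E g) \<epsilon>)) (phi P g k) = phi P g h"
    using phi_natural[of \<epsilon> "idc E g"] f2_idc[of g] B.hcmp_idc[of I I] ty by simp
  moreover have "vcmp B (f2 P (inv2 E \<gamma>')) L = phi P g k"
    using ty by (intro f2_inv2_vcmp) simp_all
  ultimately have "vcmp B (f2 P \<psi>) L = phi P g h"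
    unfolding \<psi>_def using f2_vcmp[of "inv2 E \<gamma>'" "hcmp E (idc E g) \<epsilon>"] E.iso2_inv2[of \<gamma>'] ty
    by (simp add: B.vcmp_assoc[symmetric])
  then show ?thesis
    unfolding \<psi>_def using ty by (intro exI[of _ "vcmp E (hcmp E (idc E g) \<epsilon>) (inv2 E \<gamma>')"]) simp
qed

lemma exists_pseudo_inverse:
  assumes h: "h \<in> fib_ar E B P b"
  shows "\<exists>g\<in>fib_ar E B P b. bsrc E g = btrg E h \<and> btrg E g = bsrc E h \<and>
    (\<exists>\<alpha>. fib_iso E B P b \<alpha> \<and> dom2 E \<alpha> = fib_cmp E B P cl b g h \<and>
      cod2 E \<alpha> = fib_id E B P cl (bsrc E h)) \<and>
    (\<exists>\<alpha>. fib_iso E B P b \<alpha> \<and> dom2 E \<alpha> = fib_cmp E B P cl b h g \<and>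
      cod2 E \<alpha> = fib_id E B P cl (btrg E h))"
proof -
  obtain g \<gamma> where g: "g \<in> fib_ar E B P b" "bsrc E g = btrg E h" "btrg E g = bsrc E h"
    and \<gamma>: "iso2 E \<gamma>" "dom2 E \<gamma> = cmp E h g" "cod2 E \<gamma> = fib_id E B P cl (btrg E h)"
      "vcmp B (f2 P \<gamma>) (phi P h g) = L"
    using exists_right_pseudo_inverse[OF h] by blast
  obtain k \<gamma>' where k: "k \<in> fib_ar E B P b" "bsrc E k = btrg E g" "btrg E k = bsrc E g"
    and \<gamma>': "iso2 E \<gamma>'" "dom2 E \<gamma>' = cmp E g k" "cod2 E \<gamma>' = fib_id E B P cl (btrg E g)"
      "vcmp B (f2 P \<gamma>') (phi P g k) = L"
    using exists_right_pseudo_inverse[OF g(1)] by blast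
  obtain \<psi> where \<psi>: "\<psi> \<in> ce E" "dom2 E \<psi> = fib_id E B P cl (bsrc E h)" "cod2 E \<psi> = cmp E g h"
      "vcmp B (f2 P \<psi>) L = phi P g h"
    using right_pseudo_inverse_is_left[OF h g(1) k(1) refl refl, of \<gamma> \<gamma>'] g k \<gamma> \<gamma>' by auto
  have left: "\<exists>\<alpha>. fib_iso E B P b \<alpha> \<and> dom2 E \<alpha> = fib_cmp E B P cl b g h \<and>
      cod2 E \<alpha> = fib_id E B P cl (bsrc E h)"
    using fib_iso_to_fib_id[OF g(1) h _ _ _ \<psi>] g by simp
  have inv_\<gamma>: "vcmp B (f2 P (inv2 E \<gamma>)) L = phi P h g"
    using \<gamma> fib_arD[OF h] fib_arD[OF g(1)] g by (intro f2_inv2_vcmp) simp_all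
  have right: "\<exists>\<alpha>. fib_iso E B P b \<alpha> \<and> dom2 E \<alpha> = fib_cmp E B P cl b h g \<and>
      cod2 E \<alpha> = fib_id E B P cl (btrg E h)"
    using fib_iso_to_fib_id[OF h g(1) _ g(2) refl _ _ _ inv_\<gamma>] g \<gamma> E.iso2_inv2[OF \<gamma>(1)] by simp
  show ?thesis using g left right by blast
qed

end

theorem proposition3p26:
  fixes E :: "('o,'a,'c) bicat" and B :: "('p,'q,'r) bicat"
    and P :: "('o,'a,'c,'p,'q,'r) laxf" and cl :: "'a \<Rightarrow> 'r \<Rightarrow> 'c"
  assumes "fibered_in_pseudogroupoids E B P"
    and "local_cleavage E B P cl"
    and "b \<in> ob B"
  shows "fiber_is_pseudogroupoid E B P cl b"
proof -
  interpret fibration_fiber E B P cl b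
    using assms by unfold_locales
  show ?thesis
    unfolding fiber_is_pseudogroupoid_def using exists_pseudo_inverse fib_iso_fib_ce by blast
qed

end
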